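(* Under the hypotheses of Theorem 5.2 ($f$ convex, differentiable, symmetric, $M$-smooth and $m$-strongly convex, $m>0$, $\kappa=M/m$, $X^\star$ the minimizer of $f$ over $\mathbb{S}^n_+$, $X^0=\frac{1}{\|\nabla f(0)-\nabla f(e_1e_1^\top)\|_F}\mathcal{P}_+(-\nabla f(0))$, $U^0\in\mathbb{R}^{n\times r}$ with $U^0(U^0)^\top=X^0_r$), suppose additionally that $\mathrm{rank}(X^\star)=r$, and let $U^\star_r\in\mathbb{R}^{n\times r}$ with $X^\star=U^\star_r(U^\star_r)^\top$. Then $$\mathrm{Dist}(U^0,U^\star_r)\le 4\sqrt{2}\,r\,\tau(X^\star)\sqrt{\kappa^2-\tfrac{2}{\kappa}+1}\;\sigma_r(U^\star_r).$$
   Context: $\mathbb{S}^n_+$ is the cone of $n\times n$ positive semidefinite matrices; $\mathcal{P}_+(Y)$ is the projection of a symmetric matrix $Y$ onto $\mathbb{S}^n_+$ (keep only positive eigenvalues in the eigendecomposition). $e_1$ is the first standard basis vector. $X^0_r$ is the best rank-$r$ approximation of $X^0$ (truncated eigendecomposition). For a matrix $A$, $\sigma_i(A)$ is its $i$-th largest singular value, $\|A\|_2=\sigma_1(A)$, $\|A\|_F$ the Frobenius norm. For a rank-$r$ PSD matrix $Z$, $\tau(Z)=\sigma_1(Z)/\sigma_r(Z)$. For $U,V\in\mathbb{R}^{n\times r}$, $\mathrm{Dist}(U,V)=\min_{R\in\mathcal{O}_r}\|U-VR\|_F$, $\mathcal{O}_r$ the $r\times r$ orthogonal matrices. $M$-smooth: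 $\|\nabla f(X)-\nabla f(Y)\|_F\le M\|X-Y\|_F$ for all $X,Y\in\mathbb{S}^n_+$. $m$-strongly convex: $f(Y)\ge f(X)+\langle\nabla f(X),Y-X\rangle+\frac m2\|Y-X\|_F^2$ for all $X,Y\in\mathbb{S}^n_+$. *)

theory Defs
  imports "HOL-Analysis.Analysis"
begin

text \<open>Matrices are real^'c^'r (rows indexed by 'r, columns by 'c).
 On real^'n^'m, norm is the Frobenius norm and the inner product is the
 Frobenius inner product (sum of entrywise products).\<close>

definition psd :: "real^'n^'n \<Rightarrow> bool" where
  "psd A \<longleftrightarrow> transpose A = A \<and> (\<forall>x. 0 \<le> x \<bullet> (A *v x))"

definition psd_cone :: "(real^'n^'n) set" where
  "psd_cone = {A. psd A}"

definition proj_psd :: "real^'n^'n \<Rightarrow> real^'n^'n" where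
  "proj_psd Y = closest_point psd_cone Y"

definition outer :: "real^'r \<Rightarrow> real^'c \<Rightarrow> real^'c^'r" where
  "outer u v = (\<chi> i j. u $ i * v $ j)"

definition is_svd :: "real^'c^'r \<Rightarrow> (nat \<Rightarrow> real) \<Rightarrow> bool" where
  "is_svd A s \<longleftrightarrow>
     (let p = min CARD('r) CARD('c) in
       (\<forall>k\<in>{1..p}. 0 \<le> s k) \<and>
       (\<forall>k j. 1 \<le> k \<longrightarrow> k \<le> j \<longrightarrow> j \<le> p \<longrightarrow> s j \<le> s k) \<and>
       (\<exists>(u::nat \<Rightarrow> real^'r) (v::nat \<Rightarrow> real^'c).
          (\<forall>k\<in>{1..p}. \<forall>j\<in>{1..p}.
             u k \<bullet> u j = (if k = j then 1 else 0) \<and> v k \<bullet> v j = (if k = j then 1 else 0)) \<and>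
          A = (\<Sum>k=1..p. s k *\<^sub>R outer (u k) (v k))))"

text \<open>sigma_k(A), the k-th largest singular value (1-based)\<close>
definition sing_val :: "real^'c^'r \<Rightarrow> nat \<Rightarrow> real" where
  "sing_val A k = (SOME s. is_svd A s) k"

definition tau :: "real^'n^'n \<Rightarrow> real" where
  "tau Z = sing_val Z 1 / sing_val Z (rank Z)"

definition Dist :: "real^'r^'n \<Rightarrow> real^'r^'n \<Rightarrow> real" where
  "Dist U V = Inf ((\<lambda>R. norm (U - V ** R)) ` {R. orthogonal_matrix R})"

definition trunc_eig :: "real^'n^'n \<Rightarrow> nat \<Rightarrow> real^'n^'n \<Rightarrow> bool" where
  "trunc_eig X r Z \<longleftrightarrow>
     (\<exists>(lam::'n \<Rightarrow> real) (q::'n \<Rightarrow> real^'n) (S::'n set).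
        (\<forall>i j. q i \<bullet> q j = (if i = j then 1 else 0)) \<and>
        X = (\<Sum>i\<in>UNIV. lam i *\<^sub>R outer (q i) (q i)) \<and>
        card S = r \<and> (\<forall>i\<in>S. \<forall>j. j \<notin> S \<longrightarrow> lam j \<le> lam i) \<and>
        Z = (\<Sum>i\<in>S. lam i *\<^sub>R outer (q i) (q i)))"

end

theory Submission
  imports Defs
begin

text \<open>\<open>X\<^sup>0\<close> is one projected gradient step from \<open>0\<close> with step size \<open>1/L\<close>, \<open>m \<le> L \<le> M\<close>, and \<open>X\<^sup>\<star>\<close> is a
  fixed point of the same step, so nonexpansiveness of the projection gives
  \<open>\<parallel>X\<^sup>0 - X\<^sup>\<star>\<parallel>\<^sup>2 \<le> (\<kappa>\<^sup>2 - 2/\<kappa> + 1) \<parallel>X\<^sup>\<star>\<parallel>\<^sup>2 \<le> (\<kappa>\<^sup>2 - 2/\<kappa> + 1) r \<sigma>\<^sub>1(X\<^sup>\<star>)\<^sup>2\<close>. By Eckart--Young the truncation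
  \<open>X\<^sup>0\<^sub>r\<close> is at least as close to \<open>X\<^sup>0\<close> as the rank-\<open>r\<close> matrix \<open>X\<^sup>\<star>\<close>, hence
  \<open>\<parallel>X\<^sup>0\<^sub>r - X\<^sup>\<star>\<parallel> \<le> 2 \<parallel>X\<^sup>0 - X\<^sup>\<star>\<parallel>\<close>. Rotating \<open>U\<^sup>\<star>\<close> by the orthogonal Procrustes solution makes
  \<open>(U\<^sup>\<star>R)\<^sup>T U\<^sup>0\<close> positive semidefinite, and for such aligned factors
  \<open>\<parallel>U\<^sup>0U\<^sup>0\<^sup>T - U\<^sup>\<star>U\<^sup>\<star>\<^sup>T\<parallel>\<^sup>2 \<ge> 4/5 \<sigma>\<^sub>r(U\<^sup>\<star>)\<^sup>2 \<parallel>U\<^sup>0 - U\<^sup>\<star>R\<parallel>\<^sup>2\<close>. Together with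
  \<open>\<sigma>\<^sub>r(X\<^sup>\<star>) \<le> \<sigma>\<^sub>r(U\<^sup>\<star>)\<^sup>2\<close> this yields the bound, with room to spare in the constant.\<close>

section \<open>Matrix algebra\<close>

lemma inner_matrix_eq_trace:
  fixes A B :: "real^'c^'r"
  shows "A \<bullet> B = trace (transpose A ** B)"
proof -
  have "A \<bullet> B = (\<Sum>i\<in>UNIV. \<Sum>j\<in>UNIV. A$i$j * B$i$j)"
    by (simp add: inner_vec_def inner_real_def)
  also have "\<dots> = (\<Sum>j\<in>UNIV. \<Sum>i\<in>UNIV. A$i$j * B$i$j)"
    by (rule sum.swap)
  also have "\<dots> = trace (transpose A ** B)"
    by (simp add: trace_def matrix_matrix_mult_def transpose_def)
  finally show ?thesis .
qed

lemma inner_matrix_vector_mult: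
  fixes A :: "real^'n^'m"
  shows "x \<bullet> (A *v y) = (transpose A *v x) \<bullet> y"
  by (simp add: dot_lmul_matrix[symmetric])

lemma inner_symmetric_matrix_vector_mult:
  fixes A :: "real^'n^'n"
  assumes "transpose A = A"
  shows "x \<bullet> (A *v y) = (A *v x) \<bullet> y"
  using inner_matrix_vector_mult[of x A y] assms by simp

lemma inner_transpose_mult_vector:
  fixes U :: "real^'r^'n"
  shows "(transpose U *v a) \<bullet> (transpose U *v b) = a \<bullet> ((U ** transpose U) *v b)"
  by (simp add: inner_matrix_vector_mult matrix_vector_mul_assoc[symmetric])

lemma inner_orthogonal_matrix_mult:
  fixes R :: "real^'r^'r"
  assumes "orthogonal_matrix R"
  shows "(R *v x) \<bullet> (R *v x) = x \<bullet> x"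
  using assms inner_matrix_vector_mult[of "R *v x" R x]
  by (simp only: matrix_vector_mul_assoc orthogonal_matrix) simp

lemma outer_mult_vector: "outer a b *v x = (b \<bullet> x) *\<^sub>R a"
  by (simp add: outer_def matrix_vector_mult_def vec_eq_iff inner_vec_def sum_distrib_left
      mult_ac inner_real_def)

lemma inner_outer: "outer a b \<bullet> outer c d = (a \<bullet> c) * (b \<bullet> d)"
proof -
  have "outer a b \<bullet> outer c d = (\<Sum>i\<in>UNIV. \<Sum>j\<in>UNIV. (a$i * c$i) * (b$j * d$j))"
    by (simp add: outer_def inner_vec_def inner_real_def mult_ac)
  also have "\<dots> = (a \<bullet> c) * (b \<bullet> d)"
    by (simp add: sum_product inner_vec_def inner_real_def)
  finally show ?thesis .
qed

lemma transpose_outer: "transpose (outer a b) = outer b a"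
  by (simp add: outer_def transpose_def vec_eq_iff)

lemma trace_mult_outer: "trace ((T::real^'r^'r) ** outer a b) = b \<bullet> (T *v a)"
  by (simp add: trace_def matrix_matrix_mult_def outer_def inner_vec_def matrix_vector_mult_def
      sum_distrib_left mult_ac inner_real_def)

lemma matrix_vector_mult_sum: "(A::real^'n^'m) *v (\<Sum>k\<in>K. f k) = (\<Sum>k\<in>K. A *v f k)"
  by (induct K rule: infinite_finite_induct) (auto simp: matrix_vector_right_distrib)

lemma sum_matrix_vector_mult:
  "(\<Sum>k\<in>K. F k) *v (x::real^'n) = (\<Sum>k\<in>K. (F k :: real^'n^'m) *v x)"
  by (induct K rule: infinite_finite_induct) (auto simp: matrix_vector_mult_add_rdistrib)

lemma scaleR_matrix_vector_mult: "(c *\<^sub>R (A::real^'n^'m)) *v x = c *\<^sub>R (A *v x)"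
  by (simp add: matrix_vector_mult_def vec_eq_iff sum_distrib_left mult_ac)

lemma transpose_sum: "transpose (\<Sum>k\<in>K. F k) = (\<Sum>k\<in>K. transpose (F k :: real^'n^'m))"
  by (induct K rule: infinite_finite_induct) (auto simp: transpose_def vec_eq_iff)

lemma transpose_diff: "transpose ((A::real^'a^'b) - B) = transpose A - transpose B"
  by (simp add: transpose_def vec_eq_iff)

lemma transpose_add: "transpose ((A::real^'a^'b) + B) = transpose A + transpose B"
  by (simp add: transpose_def vec_eq_iff)

lemma matrix_diff_ldistrib: "(A::real^'a^'b) ** (B - C) = A ** B - A ** C"
  by (simp add: matrix_matrix_mult_def vec_eq_iff sum_subtractf right_diff_distrib)

lemma matrix_diff_rdistrib: "((A::real^'a^'b) - B) ** C = A ** C - B ** C"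
  by (simp add: matrix_matrix_mult_def vec_eq_iff sum_subtractf left_diff_distrib)

lemma matrix_add_rdistrib: "((A::real^'a^'b) + B) ** C = A ** C + B ** C"
  by (simp add: matrix_matrix_mult_def vec_eq_iff sum.distrib distrib_right)

lemma trace_rotate3:
  "trace ((A::real^'a^'b) ** (B::real^'c^'a) ** (C::real^'b^'c)) = trace (C ** A ** B)"
  by (simp only: trace_mul_sym[of "A ** B" C] matrix_mul_assoc)

lemma trace_rotate4:
  "trace ((A::real^'a^'b) ** (B::real^'c^'a) ** (C::real^'d^'c) ** (D::real^'b^'d))
     = trace (D ** A ** B ** C)"
  by (simp only: trace_mul_sym[of "A ** B ** C" D] matrix_mul_assoc)

lemma inner_transpose_transpose: "transpose (A::real^'a^'b) \<bullet> transpose B = A \<bullet> B"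
proof -
  have "transpose A \<bullet> transpose B = (\<Sum>i\<in>UNIV. \<Sum>j\<in>UNIV. A$j$i * B$j$i)"
    by (simp add: inner_vec_def transpose_def inner_real_def)
  also have "\<dots> = A \<bullet> B"
    by (subst sum.swap) (simp add: inner_vec_def inner_real_def)
  finally show ?thesis .
qed

lemma inner_self_rows: "(A::real^'a^'b) \<bullet> A = (\<Sum>i\<in>UNIV. A$i \<bullet> A$i)"
  by (simp add: inner_vec_def)

lemma row_mult_transpose: "(D ** transpose (H::real^'r^'m)) $ i = H *v (D $ i)"
  by (simp add: matrix_matrix_mult_def transpose_def matrix_vector_mult_def vec_eq_iff mult.commute)

lemma trace_congruence:
  "trace ((D::real^'r^'n) ** (S::real^'r^'r) ** transpose D) = (\<Sum>i\<in>UNIV. D$i \<bullet> (S *v D$i))"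
  by (simp add: trace_def matrix_matrix_mult_def transpose_def inner_vec_def matrix_vector_mult_def
      sum_distrib_left sum_distrib_right mult_ac inner_real_def)
     (rule sum.cong[OF refl], subst sum.swap, simp add: mult_ac)

section \<open>Orthonormal families\<close>

definition orthonormal_on :: "'i set \<Rightarrow> ('i \<Rightarrow> 'a::real_inner) \<Rightarrow> bool" where
  "orthonormal_on I v \<longleftrightarrow> (\<forall>i\<in>I. \<forall>j\<in>I. v i \<bullet> v j = (if i = j then 1 else 0))"

lemma orthonormal_on_subset: "orthonormal_on I v \<Longrightarrow> J \<subseteq> I \<Longrightarrow> orthonormal_on J v"
  unfolding orthonormal_on_def by blast

lemma orthonormal_on_inj: "orthonormal_on I v \<Longrightarrow> inj_on v I"
  unfolding orthonormal_on_def inj_on_def by (metis one_neq_zero)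

lemma orthonormal_on_independent:
  fixes v :: "'i \<Rightarrow> 'a::euclidean_space"
  assumes "orthonormal_on I v"
  shows "independent (v ` I)"
proof (rule pairwise_orthogonal_independent)
  show "pairwise orthogonal (v ` I)"
    using assms unfolding orthonormal_on_def pairwise_def orthogonal_def by auto
  show "0 \<notin> v ` I"
    using assms unfolding orthonormal_on_def by (metis imageE inner_zero_left zero_neq_one)
qed

lemma inner_sum_orthonormal:
  assumes "finite I" "orthonormal_on I v"
  shows "(\<Sum>i\<in>I. c i *\<^sub>R v i) \<bullet> (\<Sum>j\<in>I. d j *\<^sub>R v j) = (\<Sum>i\<in>I. c i * d i)"
proof -
  have "(\<Sum>i\<in>I. c i *\<^sub>R v i) \<bullet> (\<Sum>j\<in>I. d j *\<^sub>R v j)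
      = (\<Sum>i\<in>I. \<Sum>j\<in>I. c i * d j * (v i \<bullet> v j))"
    unfolding inner_sum_left inner_sum_right by (simp add: sum_distrib_left mult_ac, rule sum.swap)
  also have "\<dots> = (\<Sum>i\<in>I. \<Sum>j\<in>I. if j = i then c i * d i else 0)"
    using assms(2) unfolding orthonormal_on_def by (intro sum.cong refl) auto
  finally show ?thesis
    using assms(1) by simp
qed

lemma inner_orthonormal_sum:
  assumes "finite I" "orthonormal_on I v" "j \<in> I"
  shows "v j \<bullet> (\<Sum>i\<in>I. c i *\<^sub>R v i) = c j"
proof -
  have "v j \<bullet> (\<Sum>i\<in>I. c i *\<^sub>R v i) = (\<Sum>i\<in>I. if i = j then c j else 0)"
    unfolding inner_sum_right using assms(2,3) unfolding orthonormal_on_def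
    by (intro sum.cong refl) (auto simp: inner_commute)
  then show ?thesis
    using assms by simp
qed

lemma bessel_inequality:
  assumes "finite I" "orthonormal_on I v"
  shows "(\<Sum>i\<in>I. (v i \<bullet> x)^2) \<le> x \<bullet> x"
proof -
  define p where "p = (\<Sum>i\<in>I. (v i \<bullet> x) *\<^sub>R v i)"
  have pp: "p \<bullet> p = (\<Sum>i\<in>I. (v i \<bullet> x)^2)"
    unfolding p_def by (simp add: inner_sum_orthonormal[OF assms] power2_eq_square)
  have xp: "x \<bullet> p = (\<Sum>i\<in>I. (v i \<bullet> x)^2)"
    unfolding p_def by (simp add: inner_sum_right power2_eq_square inner_commute)
  have "0 \<le> (x - p) \<bullet> (x - p)"
    by simp
  also have "\<dots> = x \<bullet> x - 2 * (x \<bullet> p) + p \<bullet> p"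
    by (simp add: inner_diff inner_commute)
  finally show ?thesis
    using pp xp by simp
qed

lemma orthonormal_basis_expansion:
  fixes v :: "'i \<Rightarrow> real^'a"
  assumes "finite I" "orthonormal_on I v" "card I = CARD('a)"
  shows "x = (\<Sum>i\<in>I. (v i \<bullet> x) *\<^sub>R v i)"
proof -
  have "card (v ` I) = dim (UNIV :: (real^'a) set)"
    using card_image[OF orthonormal_on_inj[OF assms(2)]] assms(3) by simp
  then have span: "UNIV \<subseteq> span (v ` I)"
    using card_eq_dim[of "v ` I" UNIV] orthonormal_on_independent[OF assms(2)] assms(1) by auto
  define y where "y = x - (\<Sum>i\<in>I. (v i \<bullet> x) *\<^sub>R v i)"
  have "orthogonal y z" if z: "z \<in> v ` I" for z
  proof -
    obtain j where j: "j \<in> I" "z = v j"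
      using z by auto
    have "v j \<bullet> y = 0"
      unfolding y_def inner_diff_right inner_orthonormal_sum[OF assms(1,2) j(1)] by simp
    then show ?thesis
      using j by (simp add: orthogonal_def inner_commute)
  qed
  then have "orthogonal y y"
    using orthogonal_to_span[of y "v ` I" y] span by auto
  then show ?thesis
    unfolding y_def by (simp add: orthogonal_def)
qed

lemma parseval_identity:
  fixes v :: "'i \<Rightarrow> real^'a"
  assumes "finite I" "orthonormal_on I v" "card I = CARD('a)"
  shows "(\<Sum>i\<in>I. (v i \<bullet> x)^2) = x \<bullet> x"
  using inner_sum_orthonormal[OF assms(1,2), of "\<lambda>i. v i \<bullet> x" "\<lambda>i. v i \<bullet> x"]
    orthonormal_basis_expansion[OF assms, of x]
  by (simp add: power2_eq_square)

lemma frobenius_bessel_inequality: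
  fixes A :: "real^'n^'m"
  assumes "finite K" "orthonormal_on K w"
  shows "(\<Sum>k\<in>K. (A *v w k) \<bullet> (A *v w k)) \<le> A \<bullet> A"
proof -
  have "(\<Sum>k\<in>K. (A *v w k) \<bullet> (A *v w k)) = (\<Sum>k\<in>K. \<Sum>i\<in>UNIV. (A $ i \<bullet> w k)^2)"
    unfolding inner_vec_def[of "A *v w _"]
    by (simp add: matrix_vector_mul_component power2_eq_square)
  also have "\<dots> = (\<Sum>i\<in>UNIV. \<Sum>k\<in>K. (w k \<bullet> A $ i)^2)"
    by (subst sum.swap) (simp add: inner_commute)
  also have "\<dots> \<le> (\<Sum>i\<in>UNIV. A $ i \<bullet> A $ i)"
    by (intro sum_mono bessel_inequality[OF assms])
  finally show ?thesis
    by (simp add: inner_self_rows)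
qed

section \<open>Spectral theorem for symmetric matrices\<close>

definition quad_form :: "real^'n^'n \<Rightarrow> real^'n \<Rightarrow> real" where
  "quad_form A x = x \<bullet> (A *v x)"

lemma quad_form_scaleR: "quad_form A (c *\<^sub>R x) = c^2 * quad_form A x"
  unfolding quad_form_def by (simp add: matrix_vector_mult_scaleR power2_eq_square)

lemma quad_form_add_scaleR:
  fixes A :: "real^'n^'n"
  assumes "transpose A = A"
  shows "quad_form A (x + t *\<^sub>R y) = quad_form A x + 2 * t * (x \<bullet> (A *v y)) + t^2 * quad_form A y"
proof -
  have "y \<bullet> (A *v x) = x \<bullet> (A *v y)"
    using inner_symmetric_matrix_vector_mult[OF assms, of y x] by (simp add: inner_commute)
  then show ?thesis
    unfolding quad_form_def
    by (simp add: algebra_simps inner_add inner_commute power2_eq_square matrix_vector_mult_scaleR)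
qed

lemma linear_coeff_eq_0_if_quadratic_nonpos:
  fixes p q :: real
  assumes "\<And>t. t * p + t^2 * q \<le> 0"
  shows "p = 0"
proof (rule ccontr)
  assume p: "p \<noteq> 0"
  define s where "s = 1 / (\<bar>q\<bar> + 1)"
  have s: "s > 0" "s * \<bar>q\<bar> < 1"
    unfolding s_def by (simp_all add: field_simps)
  have "- (s * \<bar>q\<bar>) \<le> s * q"
    using mult_left_mono[of "-\<bar>q\<bar>" q s] s by simp
  with s have "0 < s * p^2 * (1 + s * q)"
    using p by (intro mult_pos_pos) auto
  also have "\<dots> = (s * p) * p + (s * p)^2 * q"
    by (simp add: power2_eq_square algebra_simps)
  finally show False
    using assms[of "s * p"] by linarith
qed

lemma quad_form_attains_max_on_orthogonal_complement:
  fixes A :: "real^'n^'n" and V :: "(real^'n) set"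
  assumes "finite V" "card V < CARD('n)"
  obtains x where "norm x = 1" "\<And>v. v \<in> V \<Longrightarrow> x \<bullet> v = 0"
    "\<And>y. norm y = 1 \<Longrightarrow> (\<And>v. v \<in> V \<Longrightarrow> y \<bullet> v = 0) \<Longrightarrow> quad_form A y \<le> quad_form A x"
proof -
  define S where "S = {y::real^'n. norm y = 1 \<and> (\<forall>v\<in>V. y \<bullet> v = 0)}"
  have "S = sphere 0 1 \<inter> (\<Inter>v\<in>V. {y. v \<bullet> y = 0})"
    unfolding S_def by (auto simp: inner_commute)
  then have "compact S"
    by (auto intro!: compact_Int_closed closed_INT closed_hyperplane)
  have "dim V < DIM(real^'n)"
    using dim_le_card'[OF assms(1)] assms(2) by simp
  then obtain z :: "real^'n" where "z \<noteq> 0" "\<And>y. y \<in> span V \<Longrightarrow> orthogonal z y"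
    using orthogonal_to_subspace_exists by blast
  then have "z /\<^sub>R norm z \<in> S"
    unfolding S_def by (auto simp: orthogonal_def span_base)
  then have "S \<noteq> {}"
    by auto
  moreover have "continuous_on S (quad_form A)"
    unfolding quad_form_def by (intro continuous_intros linear_continuous_on) (simp add: bounded_linear_def)
  ultimately obtain x where "x \<in> S" "\<And>y. y \<in> S \<Longrightarrow> quad_form A y \<le> quad_form A x"
    using continuous_attains_sup[OF \<open>compact S\<close>] by blast
  then show ?thesis
    using that unfolding S_def by blast
qed

text \<open>Perturbing a maximiser \<open>x\<close> to \<open>x + t y\<close> shows that \<open>A x\<close> is orthogonal to every \<open>y\<close> in
  the complement that is orthogonal to \<open>x\<close>.\<close>

lemma quad_form_max_stationary:
  fixes A :: "real^'n^'n" and V :: "(real^'n) set"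
  assumes sym: "transpose A = A"
    and nx: "norm x = 1" and xV: "\<And>v. v \<in> V \<Longrightarrow> x \<bullet> v = 0"
    and max: "\<And>y. norm y = 1 \<Longrightarrow> (\<And>v. v \<in> V \<Longrightarrow> y \<bullet> v = 0) \<Longrightarrow> quad_form A y \<le> quad_form A x"
    and yV: "\<And>v. v \<in> V \<Longrightarrow> y \<bullet> v = 0" and yx: "y \<bullet> x = 0"
  shows "x \<bullet> (A *v y) = 0"
proof -
  define mu where "mu = quad_form A x"
  have xx: "x \<bullet> x = 1"
    using nx by (simp add: norm_eq_1)
  have "2 * (x \<bullet> (A *v y)) = 0"
  proof (rule linear_coeff_eq_0_if_quadratic_nonpos)
    fix t :: real
    define z where "z = x + t *\<^sub>R y"
    have zz: "z \<bullet> z = 1 + t^2 * (y \<bullet> y)"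
      unfolding z_def using xx yx by (simp add: inner_add inner_commute power2_eq_square algebra_simps)
    then have zpos: "z \<bullet> z > 0"
      by (simp add: add_pos_nonneg)
    have "(z /\<^sub>R norm z) \<bullet> v = 0" if "v \<in> V" for v
      using yV[OF that] xV[OF that] by (simp add: z_def inner_add_left)
    moreover have "norm (z /\<^sub>R norm z) = 1"
      using zpos by auto
    ultimately have "quad_form A (z /\<^sub>R norm z) \<le> mu"
      unfolding mu_def by (intro max)
    then have "quad_form A z \<le> mu * (z \<bullet> z)"
      using zpos by (simp add: quad_form_scaleR power_inverse power2_norm_eq_inner field_simps)
    then show "t * (2 * (x \<bullet> (A *v y))) + t^2 * (quad_form A y - mu * (y \<bullet> y)) \<le> 0"
      unfolding z_def quad_form_add_scaleR[OF sym] using zz[unfolded z_def] mu_def xx yx inner_commute[of x y]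
      by (simp add: algebra_simps power2_eq_square)
  qed
  then show ?thesis
    by simp
qed

text \<open>By symmetry \<open>A x\<close> is orthogonal to the eigenvectors in \<open>V\<close>, so \<open>g = A x - \<mu> x\<close> satisfies the
  hypotheses of the previous lemma, and \<open>g \<bullet> g = x \<bullet> A g = 0\<close>.\<close>

lemma quad_form_max_is_eigenvector:
  fixes A :: "real^'n^'n" and V :: "(real^'n) set"
  assumes sym: "transpose A = A" and eigen: "\<And>v. v \<in> V \<Longrightarrow> \<exists>c. A *v v = c *\<^sub>R v"
    and nx: "norm x = 1" and xV: "\<And>v. v \<in> V \<Longrightarrow> x \<bullet> v = 0"
    and max: "\<And>y. norm y = 1 \<Longrightarrow> (\<And>v. v \<in> V \<Longrightarrow> y \<bullet> v = 0) \<Longrightarrow> quad_form A y \<le> quad_form A x"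
  shows "A *v x = quad_form A x *\<^sub>R x"
proof -
  define mu where "mu = quad_form A x"
  have xx: "x \<bullet> x = 1"
    using nx by (simp add: norm_eq_1)
  define g where "g = A *v x - mu *\<^sub>R x"
  have gV: "g \<bullet> v = 0" if v: "v \<in> V" for v
  proof -
    obtain c where "A *v v = c *\<^sub>R v"
      using eigen[OF v] by blast
    then have "v \<bullet> (A *v x) = 0"
      using xV[OF v] inner_symmetric_matrix_vector_mult[OF sym, of v x] by (simp add: inner_commute)
    then show ?thesis
      unfolding g_def using xV[OF v] by (simp add: inner_diff_right inner_commute)
  qed
  have gx: "g \<bullet> x = 0"
    unfolding g_def mu_def quad_form_def using xx by (simp add: inner_diff_left inner_diff_right inner_commute)
  have "g \<bullet> g = x \<bullet> (A *v g)"
    using inner_symmetric_matrix_vector_mult[OF sym, of x g] gx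
    by (simp add: g_def inner_diff_left inner_commute)
  also have "\<dots> = 0"
    by (rule quad_form_max_stationary[OF sym nx xV max gV gx])
  finally show ?thesis
    unfolding g_def mu_def by simp
qed

text \<open>The last clause of the invariant (the quadratic form on the orthogonal complement of \<open>L\<close>
  never exceeds its value at the last vector) is what keeps the list sorted when it is extended
  by a maximiser on that complement.\<close>

definition greedy_eigenvectors :: "real^'n^'n \<Rightarrow> (real^'n) list \<Rightarrow> bool" where
  "greedy_eigenvectors A L \<longleftrightarrow>
    (\<forall>i<length L. \<forall>j<length L. L!i \<bullet> L!j = (if i = j then 1 else 0)) \<and>
    (\<forall>i<length L. A *v (L!i) = quad_form A (L!i) *\<^sub>R L!i) \<and>
    (\<forall>i j. i \<le> j \<longrightarrow> j < length L \<longrightarrow> quad_form A (L!j) \<le> quad_form A (L!i)) \<and>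
    (L \<noteq> [] \<longrightarrow> (\<forall>y. norm y = 1 \<and> (\<forall>v\<in>set L. y \<bullet> v = 0) \<longrightarrow> quad_form A y \<le> quad_form A (last L)))"

lemma greedy_eigenvectors_snoc:
  fixes A :: "real^'n^'n"
  assumes sym: "transpose A = A" and L: "greedy_eigenvectors A L" and len: "length L < CARD('n)"
  shows "\<exists>x. greedy_eigenvectors A (L @ [x])"
proof -
  have "card (set L) < CARD('n)"
    using card_length[of L] len by linarith
  then obtain x where nx: "norm x = 1" and xL: "\<And>v. v \<in> set L \<Longrightarrow> x \<bullet> v = 0"
    and max: "\<And>y. norm y = 1 \<Longrightarrow> (\<And>v. v \<in> set L \<Longrightarrow> y \<bullet> v = 0) \<Longrightarrow> quad_form A y \<le> quad_form A x"
    using quad_form_attains_max_on_orthogonal_complement[of "set L" A] by blast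
  have "A *v x = quad_form A x *\<^sub>R x"
  proof (rule quad_form_max_is_eigenvector[OF sym _ nx xL max])
    show "\<exists>c. A *v v = c *\<^sub>R v" if "v \<in> set L" for v
      using L that unfolding greedy_eigenvectors_def in_set_conv_nth by blast
  qed auto
  moreover have "x \<bullet> x = 1"
    using nx by (simp add: norm_eq_1)
  moreover have "x \<bullet> L ! k = 0" "L ! k \<bullet> x = 0" if "k < length L" for k
    using xL[of "L!k"] that by (auto simp: inner_commute)
  moreover have "quad_form A x \<le> quad_form A (L ! i)" if "i < length L" for i
  proof -
    have "quad_form A x \<le> quad_form A (last L)"
      using L nx xL that unfolding greedy_eigenvectors_def by auto
    also have "\<dots> = quad_form A (L ! (length L - 1))"
      using that by (subst last_conv_nth) auto
    also have "\<dots> \<le> quad_form A (L ! i)"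
      using L that unfolding greedy_eigenvectors_def by auto
    finally show ?thesis .
  qed
  ultimately have "greedy_eigenvectors A (L @ [x])"
    using L max unfolding greedy_eigenvectors_def
    by (auto simp: nth_append less_Suc_eq le_less_Suc_eq le_Suc_eq not_less)
  then show ?thesis ..
qed

lemma greedy_eigenvectors_exist:
  fixes A :: "real^'n^'n"
  assumes "transpose A = A" "k \<le> CARD('n)"
  shows "\<exists>L. length L = k \<and> greedy_eigenvectors A L"
  using assms(2)
proof (induct k)
  case 0
  show ?case
    by (rule exI[of _ "[]"]) (simp add: greedy_eigenvectors_def)
next
  case (Suc k)
  then obtain L where "length L = k" "greedy_eigenvectors A L"
    by auto
  with greedy_eigenvectors_snoc[OF assms(1)] Suc show ?case
    by (metis Suc_le_eq length_append_singleton)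
qed

theorem symmetric_spectral_decomposition:
  fixes A :: "real^'n^'n"
  assumes "transpose A = A"
  obtains w :: "nat \<Rightarrow> real^'n" and mu :: "nat \<Rightarrow> real" where
    "orthonormal_on {1..CARD('n)} w"
    "\<And>k j. 1 \<le> k \<Longrightarrow> k \<le> j \<Longrightarrow> j \<le> CARD('n) \<Longrightarrow> mu j \<le> mu k"
    "\<And>k. k \<in> {1..CARD('n)} \<Longrightarrow> A *v w k = mu k *\<^sub>R w k"
    "A = (\<Sum>k=1..CARD('n). mu k *\<^sub>R outer (w k) (w k))"
proof -
  obtain L where L: "length L = CARD('n)" "greedy_eigenvectors A L"
    using greedy_eigenvectors_exist[OF assms, of "CARD('n)"] by auto
  define w where "w k = L ! (k - 1)" for k
  define mu where "mu k = quad_form A (w k)" for k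
  have on: "orthonormal_on {1..CARD('n)} w"
    using L unfolding orthonormal_on_def greedy_eigenvectors_def w_def by (auto simp: diff_less_mono)
  have sorted: "mu j \<le> mu k" if "1 \<le> k" "k \<le> j" "j \<le> CARD('n)" for k j
    using L that unfolding greedy_eigenvectors_def mu_def w_def by (auto intro: diff_le_mono)
  have eigen: "A *v w k = mu k *\<^sub>R w k" if "k \<in> {1..CARD('n)}" for k
    using L that unfolding greedy_eigenvectors_def mu_def w_def by auto
  have "A = (\<Sum>k=1..CARD('n). mu k *\<^sub>R outer (w k) (w k))"
  proof (rule matrix_eq[THEN iffD2], rule allI)
    fix x :: "real^'n"
    have "A *v x = A *v (\<Sum>k=1..CARD('n). (w k \<bullet> x) *\<^sub>R w k)"
      using orthonormal_basis_expansion[OF _ on, of x] by simp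
    also have "\<dots> = (\<Sum>k=1..CARD('n). mu k *\<^sub>R outer (w k) (w k)) *v x"
      by (simp add: matrix_vector_mult_sum sum_matrix_vector_mult matrix_vector_mult_scaleR eigen
          scaleR_matrix_vector_mult outer_mult_vector mult.commute)
    finally show "A *v x = (\<Sum>k=1..CARD('n). mu k *\<^sub>R outer (w k) (w k)) *v x" .
  qed
  with on sorted eigen show ?thesis
    using that by blast
qed

section \<open>Singular value decompositions\<close>

lemma outer_sum_mult_vector:
  assumes "A = (\<Sum>k\<in>K. s k *\<^sub>R outer (u k) (v k))"
  shows "A *v x = (\<Sum>k\<in>K. (s k * (v k \<bullet> x)) *\<^sub>R u k)"
  unfolding assms by (simp add: sum_matrix_vector_mult scaleR_matrix_vector_mult outer_mult_vector)

lemma outer_sum_transpose_mult_vector: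
  assumes "A = (\<Sum>k\<in>K. s k *\<^sub>R outer (u k) (v k))"
  shows "transpose A *v x = (\<Sum>k\<in>K. (s k * (u k \<bullet> x)) *\<^sub>R v k)"
  unfolding assms
  by (simp add: transpose_sum transpose_scalar transpose_outer sum_matrix_vector_mult
      scaleR_matrix_vector_mult outer_mult_vector)

lemma inner_self_outer_sum_mult_vector:
  assumes "A = (\<Sum>k\<in>K. s k *\<^sub>R outer (u k) (v k))" "finite K" "orthonormal_on K u"
  shows "(A *v x) \<bullet> (A *v x) = (\<Sum>k\<in>K. (s k)^2 * (v k \<bullet> x)^2)"
  unfolding outer_sum_mult_vector[OF assms(1)] inner_sum_orthonormal[OF assms(2,3)]
  by (simp add: power2_eq_square mult_ac)

lemma outer_sum_mult_right_vector:
  assumes "A = (\<Sum>k\<in>K. s k *\<^sub>R outer (u k) (v k))" "finite K" "orthonormal_on K v" "j \<in> K"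
  shows "A *v v j = s j *\<^sub>R u j"
proof -
  have "A *v v j = (\<Sum>k\<in>K. (if k = j then s j *\<^sub>R u j else 0))"
    unfolding outer_sum_mult_vector[OF assms(1)] using assms(3,4) unfolding orthonormal_on_def
    by (intro sum.cong refl) auto
  then show ?thesis
    using assms(2,4) by simp
qed

lemma outer_sum_transpose_mult_left_vector:
  assumes "A = (\<Sum>k\<in>K. s k *\<^sub>R outer (u k) (v k))" "finite K" "orthonormal_on K u" "j \<in> K"
  shows "transpose A *v u j = s j *\<^sub>R v j"
proof -
  have "transpose A *v u j = (\<Sum>k\<in>K. (if k = j then s j *\<^sub>R v j else 0))"
    unfolding outer_sum_transpose_mult_vector[OF assms(1)] using assms(3,4) unfolding orthonormal_on_def
    by (intro sum.cong refl) (auto simp: inner_commute)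
  then show ?thesis
    using assms(2,4) by simp
qed

lemma inner_self_outer_sum:
  assumes "A = (\<Sum>k\<in>K. s k *\<^sub>R outer (u k) (v k))" "finite K" "orthonormal_on K u" "orthonormal_on K v"
  shows "A \<bullet> A = (\<Sum>k\<in>K. (s k)^2)"
proof -
  have "A \<bullet> A = (\<Sum>k\<in>K. \<Sum>j\<in>K. s k * s j * ((u k \<bullet> u j) * (v k \<bullet> v j)))"
    unfolding assms(1) inner_sum_left inner_sum_right
    by (simp add: inner_outer mult_ac, subst sum.swap, simp add: mult_ac)
  also have "\<dots> = (\<Sum>k\<in>K. \<Sum>j\<in>K. if j = k then (s k)^2 else 0)"
    using assms(3,4) unfolding orthonormal_on_def by (intro sum.cong refl) (auto simp: power2_eq_square)
  finally show ?thesis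
    using assms(2) by simp
qed

lemma outer_sum_rank_ge:
  fixes A :: "real^'c^'r"
  assumes A: "A = (\<Sum>k=1..p. s k *\<^sub>R outer (u k) (v k))"
    and u: "orthonormal_on {1..p} u" and v: "orthonormal_on {1..p} v"
    and "j \<le> p" and s: "\<And>k. k \<in> {1..j} \<Longrightarrow> s k \<noteq> 0"
  shows "j \<le> rank A"
proof -
  have "u ` {1..j} \<subseteq> range (\<lambda>x. A *v x)"
  proof
    fix y assume "y \<in> u ` {1..j}"
    then obtain k where k: "k \<in> {1..j}" "y = u k"
      by auto
    have "A *v (inverse (s k) *\<^sub>R v k) = inverse (s k) *\<^sub>R (s k *\<^sub>R u k)"
      using outer_sum_mult_right_vector[OF A _ v, of k] k \<open>j \<le> p\<close>
      by (simp add: matrix_vector_mult_scaleR)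
    also have "\<dots> = y"
      using s[OF k(1)] k(2) by simp
    finally show "y \<in> range (\<lambda>x. A *v x)"
      by (metis rangeI)
  qed
  moreover have "orthonormal_on {1..j} u"
    using orthonormal_on_subset[OF u] \<open>j \<le> p\<close> by auto
  ultimately have "card (u ` {1..j}) \<le> rank A"
    unfolding rank_dim_range by (intro independent_card_le_dim orthonormal_on_independent)
  moreover have "card (u ` {1..j}) = j"
    using card_image[OF orthonormal_on_inj[OF \<open>orthonormal_on {1..j} u\<close>]] by simp
  ultimately show ?thesis
    by simp
qed

lemma outer_sum_rank_le:
  fixes A :: "real^'c^'r"
  assumes A: "A = (\<Sum>k=1..p. s k *\<^sub>R outer (u k) (v k))" and s: "\<And>k. k \<in> {j..p} \<Longrightarrow> s k = 0"
  shows "rank A \<le> j - 1"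
proof -
  have "range (\<lambda>x. A *v x) \<subseteq> span (u ` {1..<j})"
  proof (clarify)
    fix x
    have "(s k * (v k \<bullet> x)) *\<^sub>R u k \<in> span (u ` {1..<j})" if k: "k \<in> {1..p}" for k
    proof (cases "k < j")
      case True
      then show ?thesis
        using k by (intro span_mul span_base) auto
    next
      case False
      then show ?thesis
        using k s[of k] by (simp add: span_zero)
    qed
    then show "A *v x \<in> span (u ` {1..<j})"
      unfolding outer_sum_mult_vector[OF A] by (intro span_sum)
  qed
  then have "rank A \<le> card (u ` {1..<j})"
    unfolding rank_dim_range by (rule dim_le_card) simp
  also have "\<dots> \<le> card {1..<j}"
    by (rule card_image_le) simp
  finally show ?thesis
    by simp
qed

lemma is_svdE:
  fixes A :: "real^'c^'r"
  assumes "is_svd A s"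
  obtains u :: "nat \<Rightarrow> real^'r" and v :: "nat \<Rightarrow> real^'c" where
    "orthonormal_on {1..min CARD('r) CARD('c)} u" "orthonormal_on {1..min CARD('r) CARD('c)} v"
    "A = (\<Sum>k=1..min CARD('r) CARD('c). s k *\<^sub>R outer (u k) (v k))"
    "\<And>k. k \<in> {1..min CARD('r) CARD('c)} \<Longrightarrow> 0 \<le> s k"
    "\<And>k j. 1 \<le> k \<Longrightarrow> k \<le> j \<Longrightarrow> j \<le> min CARD('r) CARD('c) \<Longrightarrow> s j \<le> s k"
proof -
  from assms obtain u :: "nat \<Rightarrow> real^'r" and v :: "nat \<Rightarrow> real^'c" where
    "\<forall>k\<in>{1..min CARD('r) CARD('c)}. \<forall>j\<in>{1..min CARD('r) CARD('c)}.
       u k \<bullet> u j = (if k = j then 1 else 0) \<and> v k \<bullet> v j = (if k = j then 1 else 0)"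
    "A = (\<Sum>k=1..min CARD('r) CARD('c). s k *\<^sub>R outer (u k) (v k))"
    unfolding is_svd_def Let_def by blast
  with assms that show ?thesis
    unfolding is_svd_def Let_def orthonormal_on_def by auto
qed

lemma is_svd_rank:
  fixes A :: "real^'c^'r"
  assumes svd: "is_svd A s" and r: "rank A = r" "1 \<le> r"
  shows "r \<le> min CARD('r) CARD('c)" "s r > 0"
    "\<And>k. r < k \<Longrightarrow> k \<le> min CARD('r) CARD('c) \<Longrightarrow> s k = 0"
proof -
  let ?p = "min CARD('r) CARD('c)"
  obtain u v where u: "orthonormal_on {1..?p} u" and v: "orthonormal_on {1..?p} v"
    and A: "A = (\<Sum>k=1..?p. s k *\<^sub>R outer (u k) (v k))"
    and nonneg: "\<And>k. k \<in> {1..?p} \<Longrightarrow> 0 \<le> s k"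
    and sorted: "\<And>k j. 1 \<le> k \<Longrightarrow> k \<le> j \<Longrightarrow> j \<le> ?p \<Longrightarrow> s j \<le> s k"
    using is_svdE[OF svd] by blast
  show rp: "r \<le> ?p"
    using rank_bound[of A] r(1) by simp
  show "s r > 0"
  proof (rule ccontr)
    assume "\<not> s r > 0"
    moreover have "s k \<le> s r" "0 \<le> s k" if "k \<in> {r..?p}" for k
      using nonneg[of k] sorted[of r k] that r(2) by auto
    ultimately have "s k = 0" if "k \<in> {r..?p}" for k
      using that by fastforce
    then have "rank A \<le> r - 1"
      using outer_sum_rank_le[OF A] by blast
    then show False
      using r by linarith
  qed
  show "s k = 0" if k: "r < k" "k \<le> ?p" for k
  proof (rule ccontr)
    assume "s k \<noteq> 0"
    moreover have "s k \<le> s i" "0 \<le> s k" if "i \<in> {1..k}" for i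
      using sorted[of i k] nonneg[of k] that k r(2) by auto
    ultimately have "s i \<noteq> 0" if "i \<in> {1..k}" for i
      using that by fastforce
    then have "k \<le> rank A"
      using outer_sum_rank_ge[OF A u v k(2)] by blast
    then show False
      using k r by linarith
  qed
qed

lemma sing_val_is_svd:
  assumes "is_svd A s"
  shows "is_svd A (sing_val A)"
  using someI[of "is_svd A" s] assms unfolding sing_val_def[abs_def] by simp

lemma sing_val_rank_pos:
  fixes A :: "real^'c^'r"
  assumes "is_svd A (sing_val A)" "rank A = r" "1 \<le> r"
  shows "0 < sing_val A r" "sing_val A r \<le> sing_val A 1"
  using is_svd_rank[OF assms] assms(1,3) unfolding is_svd_def Let_def by auto

lemma psd_eigen_decomposition:
  fixes A :: "real^'n^'n"
  assumes "psd A"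
  obtains w :: "nat \<Rightarrow> real^'n" and mu :: "nat \<Rightarrow> real" where
    "orthonormal_on {1..CARD('n)} w"
    "\<And>k j. 1 \<le> k \<Longrightarrow> k \<le> j \<Longrightarrow> j \<le> CARD('n) \<Longrightarrow> mu j \<le> mu k"
    "\<And>k. k \<in> {1..CARD('n)} \<Longrightarrow> A *v w k = mu k *\<^sub>R w k"
    "A = (\<Sum>k=1..CARD('n). mu k *\<^sub>R outer (w k) (w k))"
    "\<And>k. k \<in> {1..CARD('n)} \<Longrightarrow> 0 \<le> mu k"
    "is_svd A mu"
proof -
  have "transpose A = A"
    using assms by (simp add: psd_def)
  then obtain w mu where w: "orthonormal_on {1..CARD('n)} w"
    and sorted: "\<And>k j. 1 \<le> k \<Longrightarrow> k \<le> j \<Longrightarrow> j \<le> CARD('n) \<Longrightarrow> mu j \<le> mu k"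
    and eigen: "\<And>k. k \<in> {1..CARD('n)} \<Longrightarrow> A *v w k = mu k *\<^sub>R w k"
    and A: "A = (\<Sum>k=1..CARD('n). mu k *\<^sub>R outer (w k) (w k))"
    by (rule symmetric_spectral_decomposition) blast
  have nonneg: "0 \<le> mu k" if k: "k \<in> {1..CARD('n)}" for k
  proof -
    have "0 \<le> w k \<bullet> (A *v w k)"
      using assms by (simp add: psd_def)
    also have "\<dots> = mu k"
      using eigen[OF k] w k by (simp add: orthonormal_on_def)
    finally show ?thesis .
  qed
  have "is_svd A mu"
    unfolding is_svd_def Let_def using w sorted A nonneg unfolding orthonormal_on_def
    by (intro conjI ballI allI impI exI[of _ w]) auto
  with w sorted eigen A nonneg show ?thesis
    using that by blast
qed

lemma psd_is_svd_sing_val: "psd A \<Longrightarrow> is_svd A (sing_val A)"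
  by (metis psd_eigen_decomposition sing_val_is_svd)

lemma sum_atLeastAtMost_truncate:
  fixes f :: "nat \<Rightarrow> 'a::comm_monoid_add"
  assumes "r \<le> n" "\<And>k. r < k \<Longrightarrow> k \<le> n \<Longrightarrow> f k = 0"
  shows "(\<Sum>k=1..n. f k) = (\<Sum>k=1..r. f k)"
proof -
  have "{1..n} = {1..r} \<union> {Suc r..n}"
    using assms(1) by auto
  then have "(\<Sum>k=1..n. f k) = (\<Sum>k=1..r. f k) + (\<Sum>k=Suc r..n. f k)"
    by (simp add: sum.union_disjoint)
  also have "(\<Sum>k=Suc r..n. f k) = 0"
    using assms(2) by (intro sum.neutral) auto
  finally show ?thesis
    by simp
qed

lemma inner_self_le_rank_sing_val:
  fixes A :: "real^'c^'r"
  assumes svd: "is_svd A s" and r: "rank A = r" "1 \<le> r"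
  shows "A \<bullet> A \<le> real r * (s 1)^2"
proof -
  let ?p = "min CARD('r) CARD('c)"
  obtain u v where u: "orthonormal_on {1..?p} u" and v: "orthonormal_on {1..?p} v"
    and A: "A = (\<Sum>k=1..?p. s k *\<^sub>R outer (u k) (v k))"
    and nonneg: "\<And>k. k \<in> {1..?p} \<Longrightarrow> 0 \<le> s k"
    and sorted: "\<And>k j. 1 \<le> k \<Longrightarrow> k \<le> j \<Longrightarrow> j \<le> ?p \<Longrightarrow> s j \<le> s k"
    using is_svdE[OF svd] by blast
  note rank = is_svd_rank[OF svd r]
  have "A \<bullet> A = (\<Sum>k=1..?p. (s k)^2)"
    by (rule inner_self_outer_sum[OF A _ u v]) simp
  also have "\<dots> = (\<Sum>k=1..r. (s k)^2)"
    using rank by (intro sum_atLeastAtMost_truncate) simp_all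
  also have "\<dots> \<le> (\<Sum>k=1..r. (s 1)^2)"
    using nonneg sorted rank(1) by (intro sum_mono power_mono) auto
  finally show ?thesis
    by simp
qed

lemma inner_self_mult_vector_ge_sing_val:
  fixes A :: "real^'r^'n"
  assumes "CARD('r) \<le> CARD('n)" "is_svd A s"
  shows "(s CARD('r))^2 * (x \<bullet> x) \<le> (A *v x) \<bullet> (A *v x)"
proof -
  have p: "min CARD('n) CARD('r) = CARD('r)"
    using assms(1) by simp
  obtain u v where u: "orthonormal_on {1..CARD('r)} u" and v: "orthonormal_on {1..CARD('r)} v"
    and A: "A = (\<Sum>k=1..CARD('r). s k *\<^sub>R outer (u k) (v k))"
    and nonneg: "\<And>k. k \<in> {1..CARD('r)} \<Longrightarrow> 0 \<le> s k"
    and sorted: "\<And>k j. 1 \<le> k \<Longrightarrow> k \<le> j \<Longrightarrow> j \<le> CARD('r) \<Longrightarrow> s j \<le> s k"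
    using is_svdE[OF assms(2), unfolded p] by blast
  have "(s CARD('r))^2 * (x \<bullet> x) = (\<Sum>k=1..CARD('r). (s CARD('r))^2 * (v k \<bullet> x)^2)"
    using parseval_identity[OF _ v, of x] by (simp add: sum_distrib_left[symmetric])
  also have "\<dots> \<le> (\<Sum>k=1..CARD('r). (s k)^2 * (v k \<bullet> x)^2)"
    using nonneg sorted by (intro sum_mono mult_right_mono power_mono) auto
  also have "\<dots> = (A *v x) \<bullet> (A *v x)"
    by (rule inner_self_outer_sum_mult_vector[OF A _ u, symmetric]) simp
  finally show ?thesis .
qed

lemma psd_gram: "psd (V ** transpose V)"
  unfolding psd_def
  by (simp add: matrix_transpose_mul inner_transpose_mult_vector[symmetric])

text \<open>The SVD of a factor \<open>V\<close> is read off the eigendecomposition of \<open>V V\<^sup>T\<close>: its right singular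
  vectors are \<open>V\<^sup>T w\<^sub>k / \<surd>\<mu>\<^sub>k\<close>.\<close>

lemma gram_eigen_factor_decomposition:
  fixes V :: "real^'r^'n" and w :: "nat \<Rightarrow> real^'n" and mu :: "nat \<Rightarrow> real"
  defines "v \<equiv> \<lambda>k. (1 / sqrt (mu k)) *\<^sub>R (transpose V *v w k)"
  assumes w: "orthonormal_on {1..CARD('n)} w"
    and eigen: "\<And>k. k \<in> {1..CARD('n)} \<Longrightarrow> (V ** transpose V) *v w k = mu k *\<^sub>R w k"
    and rn: "r \<le> CARD('n)" and pos: "\<And>k. k \<in> {1..r} \<Longrightarrow> mu k > 0"
    and zero: "\<And>k. r < k \<Longrightarrow> k \<le> CARD('n) \<Longrightarrow> mu k = 0"
  shows "orthonormal_on {1..r} v" "V = (\<Sum>k=1..r. sqrt (mu k) *\<^sub>R outer (w k) (v k))"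
proof -
  have Vtw: "(transpose V *v w k) \<bullet> (transpose V *v w j) = mu j * (w k \<bullet> w j)"
    if "j \<in> {1..CARD('n)}" for k j
    using inner_transpose_mult_vector[of V "w k" "w j"] eigen[OF that] by simp
  show "orthonormal_on {1..r} v"
    unfolding orthonormal_on_def
  proof (intro ballI)
    fix k j assume k: "k \<in> {1..r}" and j: "j \<in> {1..r}"
    have "v k \<bullet> v j = mu j * (w k \<bullet> w j) / (sqrt (mu k) * sqrt (mu j))"
      unfolding v_def using Vtw[of j k] j rn by simp
    also have "\<dots> = (if k = j then 1 else 0)"
      using w k j rn pos[OF k] pos[OF j] unfolding orthonormal_on_def
      by (auto simp: real_sqrt_mult[symmetric])
    finally show "v k \<bullet> v j = (if k = j then 1 else 0)" .
  qed
  have kernel: "transpose V *v w k = 0" if "r < k" "k \<le> CARD('n)" for k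
    using Vtw[of k k] zero[OF that] that by simp
  show "V = (\<Sum>k=1..r. sqrt (mu k) *\<^sub>R outer (w k) (v k))"
  proof (rule matrix_eq[THEN iffD2], rule allI)
    fix x :: "real^'r"
    have Vx: "w k \<bullet> (V *v x) = (transpose V *v w k) \<bullet> x" for k
      by (rule inner_matrix_vector_mult)
    have "V *v x = (\<Sum>k=1..CARD('n). (w k \<bullet> (V *v x)) *\<^sub>R w k)"
      using orthonormal_basis_expansion[OF _ w, of "V *v x"] by simp
    also have "\<dots> = (\<Sum>k=1..r. (w k \<bullet> (V *v x)) *\<^sub>R w k)"
      using rn by (intro sum_atLeastAtMost_truncate) (simp_all add: Vx kernel del: transpose_matrix_vector)
    also have "\<dots> = (\<Sum>k=1..r. (sqrt (mu k) * (v k \<bullet> x)) *\<^sub>R w k)"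
    proof (rule sum.cong[OF refl])
      fix k assume "k \<in> {1..r}"
      then have "mu k > 0"
        by (rule pos)
      then show "(w k \<bullet> (V *v x)) *\<^sub>R w k = (sqrt (mu k) * (v k \<bullet> x)) *\<^sub>R w k"
        by (simp add: Vx v_def del: transpose_matrix_vector)
    qed
    also have "\<dots> = (\<Sum>k=1..r. sqrt (mu k) *\<^sub>R outer (w k) (v k)) *v x"
      by (rule outer_sum_mult_vector[symmetric]) (rule refl)
    finally show "V *v x = (\<Sum>k=1..r. sqrt (mu k) *\<^sub>R outer (w k) (v k)) *v x" .
  qed
qed

lemma gram_factor_full_rank:
  fixes V :: "real^'r^'n"
  assumes rank: "rank (V ** transpose V) = CARD('r)"
  shows "CARD('r) \<le> CARD('n)" "rank V = CARD('r)" "is_svd V (sing_val V)"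
proof -
  let ?r = "CARD('r)" and ?n = "CARD('n)"
  have r1: "1 \<le> ?r"
    by (simp add: Suc_leI)
  obtain w mu where w: "orthonormal_on {1..?n} w"
    and sorted: "\<And>k j. 1 \<le> k \<Longrightarrow> k \<le> j \<Longrightarrow> j \<le> ?n \<Longrightarrow> mu j \<le> mu k"
    and eigen: "\<And>k. k \<in> {1..?n} \<Longrightarrow> (V ** transpose V) *v w k = mu k *\<^sub>R w k"
    and svd: "is_svd (V ** transpose V) mu"
    by (rule psd_eigen_decomposition[OF psd_gram]) blast
  note mu_rank = is_svd_rank[OF svd rank r1, unfolded min.idem]
  show rn: "?r \<le> ?n"
    using mu_rank(1) .
  have pos: "mu k > 0" if "k \<in> {1..?r}" for k
  proof -
    have "mu ?r \<le> mu k"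
      using sorted[of k ?r] that rn by auto
    then show ?thesis
      using mu_rank(2) by linarith
  qed
  define v where "v = (\<lambda>k. (1 / sqrt (mu k)) *\<^sub>R (transpose V *v w k))"
  have dec: "orthonormal_on {1..?r} v" "V = (\<Sum>k=1..?r. sqrt (mu k) *\<^sub>R outer (w k) (v k))"
    using gram_eigen_factor_decomposition[OF w eigen rn pos mu_rank(3)] unfolding v_def by simp_all
  have w_r: "orthonormal_on {1..?r} w"
    using orthonormal_on_subset[OF w] rn by auto
  have "is_svd V (\<lambda>k. sqrt (mu k))"
    unfolding is_svd_def Let_def min_absorb2[OF rn]
    using w_r dec pos sorted rn unfolding orthonormal_on_def
    by (intro conjI ballI allI impI exI[of _ w] exI[of _ v]) (auto intro: less_imp_le)
  then show "is_svd V (sing_val V)"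
    by (rule sing_val_is_svd)
  have "?r \<le> rank V"
    by (intro outer_sum_rank_ge[OF dec(2) w_r dec(1) order.refl]) (fastforce dest: pos)
  then show "rank V = ?r"
    using rank_bound[of V] by simp
qed

text \<open>An eigenvector of a symmetric matrix of rank \<open>r\<close> with positive eigenvalue lies in the span
  of the top \<open>r\<close> right singular vectors, on which the matrix stretches by at least \<open>\<sigma>\<^sub>r\<close>.\<close>

lemma sing_val_le_eigenvalue:
  fixes X :: "real^'n^'n"
  assumes svd: "is_svd X s" and rank: "rank X = r" "1 \<le> r" and sym: "transpose X = X"
    and x: "X *v x = lam *\<^sub>R x" "x \<bullet> x = 1" "lam > 0"
  shows "s r \<le> lam"
proof -
  let ?n = "CARD('n)"
  obtain a b where a: "orthonormal_on {1..?n} a" and b: "orthonormal_on {1..?n} b"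
    and X: "X = (\<Sum>k=1..?n. s k *\<^sub>R outer (a k) (b k))"
    and s_nonneg: "\<And>k. k \<in> {1..?n} \<Longrightarrow> 0 \<le> s k"
    and s_sorted: "\<And>k j. 1 \<le> k \<Longrightarrow> k \<le> j \<Longrightarrow> j \<le> ?n \<Longrightarrow> s j \<le> s k"
    using is_svdE[OF svd, unfolded min.idem] by blast
  note s_rank = is_svd_rank[OF svd rank, unfolded min.idem]
  have "lam *\<^sub>R x = (\<Sum>k=1..?n. (s k * (a k \<bullet> x)) *\<^sub>R b k)"
    using x(1) sym outer_sum_transpose_mult_vector[OF X, of x] by simp
  also have "\<dots> = (\<Sum>k=1..r. (s k * (a k \<bullet> x)) *\<^sub>R b k)"
    using s_rank by (intro sum_atLeastAtMost_truncate) simp_all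
  finally have e: "lam *\<^sub>R x = (\<Sum>k=1..r. (s k * (a k \<bullet> x)) *\<^sub>R b k)" .
  define d where "d k = s k * (a k \<bullet> x) / lam" for k
  have "x = (1 / lam) *\<^sub>R (lam *\<^sub>R x)"
    using x(3) by simp
  also have "\<dots> = (\<Sum>k=1..r. d k *\<^sub>R b k)"
    unfolding e d_def scaleR_sum_right by (simp add: divide_inverse mult.commute)
  finally have x_exp: "x = (\<Sum>k=1..r. d k *\<^sub>R b k)" .
  have b_r: "orthonormal_on {1..r} b"
    using orthonormal_on_subset[OF b] s_rank(1) by auto
  have bx: "b k \<bullet> x = d k" if "k \<in> {1..r}" for k
    using inner_orthonormal_sum[OF _ b_r that, of d] x_exp by simp
  have "(\<Sum>k=1..r. (d k)^2) = 1"
    using x(2) inner_sum_orthonormal[OF _ b_r, of d d] x_exp by (simp add: power2_eq_square)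
  then have "(\<Sum>k=1..r. (b k \<bullet> x)^2) = 1"
    using bx by simp
  then have "(s r)^2 = (\<Sum>k=1..r. (s r)^2 * (b k \<bullet> x)^2)"
    by (simp add: sum_distrib_left[symmetric])
  also have "\<dots> \<le> (\<Sum>k=1..r. (s k)^2 * (b k \<bullet> x)^2)"
    using s_nonneg s_sorted s_rank(1) by (intro sum_mono mult_right_mono power_mono) auto
  also have "\<dots> = (\<Sum>k=1..?n. (s k)^2 * (b k \<bullet> x)^2)"
    using s_rank by (intro sum_atLeastAtMost_truncate[symmetric]) simp_all
  also have "\<dots> = (X *v x) \<bullet> (X *v x)"
    by (rule inner_self_outer_sum_mult_vector[OF X _ a, symmetric]) simp
  also have "\<dots> = lam^2"
    using x(1,2) by (simp add: power2_eq_square)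
  finally show "s r \<le> lam"
    using x(3) by (rule power2_le_imp_le[OF _ less_imp_le])
qed

text \<open>A left singular vector of \<open>V\<close> for \<open>\<sigma>\<^sub>r(V)\<close> is an eigenvector of \<open>V V\<^sup>T\<close> with eigenvalue
  \<open>\<sigma>\<^sub>r(V)\<^sup>2\<close>.\<close>

lemma sing_val_gram_le:
  fixes V :: "real^'r^'n"
  assumes rank: "rank (V ** transpose V) = CARD('r)"
  shows "sing_val (V ** transpose V) CARD('r) \<le> (sing_val V CARD('r))^2"
proof -
  let ?r = "CARD('r)"
  define t where "t = sing_val V"
  have r1: "1 \<le> ?r"
    by (simp add: Suc_leI)
  note V = gram_factor_full_rank[OF rank]
  obtain u v where u: "orthonormal_on {1..?r} u" and v: "orthonormal_on {1..?r} v"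
    and Vsum: "V = (\<Sum>k=1..?r. t k *\<^sub>R outer (u k) (v k))"
    using is_svdE[OF V(3)[folded t_def], unfolded min_absorb2[OF V(1)]] by blast
  have rr: "?r \<in> {1..?r}"
    using r1 by simp
  have "transpose V *v u ?r = t ?r *\<^sub>R v ?r"
    by (rule outer_sum_transpose_mult_left_vector[OF Vsum _ u rr]) simp
  moreover have "V *v v ?r = t ?r *\<^sub>R u ?r"
    by (rule outer_sum_mult_right_vector[OF Vsum _ v rr]) simp
  ultimately have "(V ** transpose V) *v u ?r = (t ?r)^2 *\<^sub>R u ?r"
    by (simp add: matrix_vector_mul_assoc[symmetric] matrix_vector_mult_scaleR power2_eq_square)
  moreover have "u ?r \<bullet> u ?r = 1"
    using u rr unfolding orthonormal_on_def by simp
  moreover have "t ?r > 0"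
    using is_svd_rank(2)[OF V(3) V(2) r1] unfolding t_def .
  ultimately show ?thesis
    unfolding t_def
    by (intro sing_val_le_eigenvalue[OF psd_is_svd_sing_val[OF psd_gram] rank r1]) (simp_all add: matrix_transpose_mul)
qed

section \<open>Truncated eigendecomposition\<close>

lemma sum_smallest_le_weighted_sum:
  fixes c mu :: "'i \<Rightarrow> real"
  assumes U: "finite U" and SU: "S \<subseteq> U" and "S \<noteq> {}"
    and c: "\<And>i. i \<in> U \<Longrightarrow> 0 \<le> c i \<and> c i \<le> 1"
    and c_sum: "(\<Sum>i\<in>U. c i) = real (card (U - S))"
    and ord: "\<And>i j. i \<in> S \<Longrightarrow> j \<in> U - S \<Longrightarrow> mu j \<le> mu i"
  shows "(\<Sum>i\<in>U - S. mu i) \<le> (\<Sum>i\<in>U. c i * mu i)"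
proof -
  define th where "th = Min (mu ` S)"
  have "finite S"
    using U SU finite_subset by auto
  then have th_S: "th \<le> mu i" if "i \<in> S" for i
    unfolding th_def using that by simp
  have th_U: "mu j \<le> th" if "j \<in> U - S" for j
    unfolding th_def using \<open>finite S\<close> \<open>S \<noteq> {}\<close> that ord by (simp add: Min_ge_iff)
  have split: "(\<Sum>i\<in>U. f i) = (\<Sum>i\<in>S. f i) + (\<Sum>i\<in>U - S. f i)" for f :: "'i \<Rightarrow> real"
    using sum.subset_diff[OF SU U] by (simp add: add.commute)
  have "(\<Sum>i\<in>S. c i * th) \<le> (\<Sum>i\<in>S. c i * mu i)"
    using th_S c SU by (intro sum_mono mult_left_mono) auto
  moreover have "(\<Sum>i\<in>U - S. (1 - c i) * mu i) \<le> (\<Sum>i\<in>U - S. (1 - c i) * th)"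
    using th_U c by (intro sum_mono mult_left_mono) auto
  moreover have "(\<Sum>i\<in>S. c i * th) - (\<Sum>i\<in>U - S. (1 - c i) * th) = 0"
  proof -
    have "(\<Sum>i\<in>S. c i * th) - (\<Sum>i\<in>U - S. (1 - c i) * th)
        = th * ((\<Sum>i\<in>U. c i) - real (card (U - S)))"
      unfolding split[of c] by (simp add: sum_distrib_left sum_distrib_right algebra_simps sum_subtractf)
    then show ?thesis
      using c_sum by simp
  qed
  ultimately have "0 \<le> (\<Sum>i\<in>S. c i * mu i) - (\<Sum>i\<in>U - S. (1 - c i) * mu i)"
    by linarith
  also have "\<dots> = (\<Sum>i\<in>U. c i * mu i) - (\<Sum>i\<in>U - S. mu i)"
    unfolding split[of "\<lambda>i. c i * mu i"] by (simp add: algebra_simps sum_subtractf)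
  finally show ?thesis
    by simp
qed

text \<open>The tail \<open>\<Sum>\<^sub>i\<^sub>\<notin>\<^sub>S \<lambda>\<^sub>i\<^sup>2\<close> left by the truncation is at most \<open>\<Sum>\<^sub>k \<parallel>X w\<^sub>k\<parallel>\<^sup>2 = \<Sum>\<^sub>i c\<^sub>i \<lambda>\<^sub>i\<^sup>2\<close>
  for any orthonormal \<open>w\<^sub>k\<close> (\<open>k \<in> W\<close>, \<open>|W| = n - r\<close>), where the weights \<open>c\<^sub>i = \<Sum>\<^sub>k (w\<^sub>k \<bullet> q\<^sub>i)\<^sup>2\<close>
  satisfy the hypotheses of the previous lemma.\<close>

lemma trunc_eig_residual_le:
  fixes X Z :: "real^'n^'n" and w :: "'k \<Rightarrow> real^'n"
  assumes psd_X: "psd X" and trunc: "trunc_eig X r Z" and r1: "1 \<le> r"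
    and W: "finite W" "orthonormal_on W w" "card W = CARD('n) - r"
  shows "(X - Z) \<bullet> (X - Z) \<le> (\<Sum>k\<in>W. (X *v w k) \<bullet> (X *v w k))"
proof -
  obtain lam :: "'n \<Rightarrow> real" and q :: "'n \<Rightarrow> real^'n" and S where
    q: "\<forall>i j. q i \<bullet> q j = (if i = j then 1 else 0)"
    and X: "X = (\<Sum>i\<in>UNIV. lam i *\<^sub>R outer (q i) (q i))"
    and S: "card S = r" and ord: "\<forall>i\<in>S. \<forall>j. j \<notin> S \<longrightarrow> lam j \<le> lam i"
    and Z: "Z = (\<Sum>i\<in>S. lam i *\<^sub>R outer (q i) (q i))"
    using trunc unfolding trunc_eig_def by blast
  have q_on: "orthonormal_on UNIV q"
    using q by (simp add: orthonormal_on_def)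
  have lam_nonneg: "0 \<le> lam i" for i
  proof -
    have "0 \<le> q i \<bullet> (X *v q i)"
      using psd_X by (simp add: psd_def)
    also have "X *v q i = lam i *\<^sub>R q i"
      by (rule outer_sum_mult_right_vector[OF X _ q_on]) simp_all
    finally show ?thesis
      using q by simp
  qed
  define c where "c i = (\<Sum>k\<in>W. (w k \<bullet> q i)^2)" for i
  have c: "0 \<le> c i \<and> c i \<le> 1" for i
    using bessel_inequality[OF W(1,2), of "q i"] q unfolding c_def by (simp add: sum_nonneg)
  have "(\<Sum>i\<in>UNIV. c i) = (\<Sum>k\<in>W. \<Sum>i\<in>UNIV. (q i \<bullet> w k)^2)"
    unfolding c_def by (subst sum.swap) (simp add: inner_commute)
  also have "\<dots> = (\<Sum>k\<in>W. 1)"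
    using parseval_identity[OF _ q_on, of "w _"] W(2) unfolding orthonormal_on_def
    by (intro sum.cong refl) simp
  also have "\<dots> = real (card (UNIV - S))"
    using S W(3) by (simp add: card_Diff_subset)
  finally have c_sum: "(\<Sum>i\<in>UNIV. c i) = real (card (UNIV - S))" .
  have "X - Z = (\<Sum>i\<in>UNIV - S. lam i *\<^sub>R outer (q i) (q i))"
    unfolding X Z by (simp add: sum_diff)
  then have "(X - Z) \<bullet> (X - Z) = (\<Sum>i\<in>UNIV - S. (lam i)^2)"
    by (rule inner_self_outer_sum) (use q_on in \<open>auto intro: orthonormal_on_subset\<close>)
  also have "\<dots> \<le> (\<Sum>i\<in>UNIV. c i * (lam i)^2)"
  proof (rule sum_smallest_le_weighted_sum[OF _ _ _ c c_sum])
    show "S \<noteq> {}"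
      using S r1 by auto
    show "\<And>i j. i \<in> S \<Longrightarrow> j \<in> UNIV - S \<Longrightarrow> (lam j)^2 \<le> (lam i)^2"
      using ord lam_nonneg by (auto intro: power_mono)
  qed auto
  also have "\<dots> = (\<Sum>k\<in>W. \<Sum>i\<in>UNIV. (lam i)^2 * (q i \<bullet> w k)^2)"
    unfolding c_def by (subst sum.swap) (simp add: sum_distrib_left inner_commute mult.commute)
  also have "\<dots> = (\<Sum>k\<in>W. (X *v w k) \<bullet> (X *v w k))"
    by (intro sum.cong refl inner_self_outer_sum_mult_vector[OF X, symmetric]) (simp_all add: q_on)
  finally show ?thesis .
qed

text \<open>Eckart--Young for PSD matrices: test the previous lemma with eigenvectors \<open>w\<^sub>k\<close> spanning the
  kernel of \<open>Y\<close>, on which \<open>X\<close> and \<open>X - Y\<close> agree.\<close>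

lemma trunc_eig_dist_le:
  fixes X Y Z :: "real^'n^'n"
  assumes psd_X: "psd X" and trunc: "trunc_eig X r Z"
    and psd_Y: "psd Y" and rank: "rank Y = r" and r1: "1 \<le> r"
  shows "(X - Z) \<bullet> (X - Z) \<le> (X - Y) \<bullet> (X - Y)"
proof -
  obtain w mu where w: "orthonormal_on {1..CARD('n)} w"
    and eigen: "\<And>k. k \<in> {1..CARD('n)} \<Longrightarrow> Y *v w k = mu k *\<^sub>R w k"
    and svd: "is_svd Y mu"
    by (rule psd_eigen_decomposition[OF psd_Y]) blast
  note mu_rank = is_svd_rank[OF svd rank r1, unfolded min.idem]
  define W where "W = {Suc r..CARD('n)}"
  have kernel: "Y *v w k = 0" if "k \<in> W" for k
    using eigen[of k] mu_rank(3)[of k] that r1 unfolding W_def by auto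
  have w_W: "orthonormal_on W w"
    using orthonormal_on_subset[OF w] r1 unfolding W_def by auto
  have "(X - Z) \<bullet> (X - Z) \<le> (\<Sum>k\<in>W. (X *v w k) \<bullet> (X *v w k))"
    by (rule trunc_eig_residual_le[OF psd_X trunc r1 _ w_W]) (simp_all add: W_def)
  also have "\<dots> = (\<Sum>k\<in>W. ((X - Y) *v w k) \<bullet> ((X - Y) *v w k))"
    by (intro sum.cong refl) (simp add: matrix_vector_mult_diff_rdistrib kernel)
  also have "\<dots> \<le> (X - Y) \<bullet> (X - Y)"
    by (rule frobenius_bessel_inequality[OF _ w_W]) (simp add: W_def)
  finally show ?thesis .
qed

lemma inner_self_diff_le_four_times:
  fixes a b c :: "'a::real_inner"
  assumes "norm (a - b) \<le> norm (b - c)"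
  shows "(a - c) \<bullet> (a - c) \<le> 4 * ((b - c) \<bullet> (b - c))"
proof -
  have "norm (a - c) \<le> norm (a - b) + norm (b - c)"
    using norm_triangle_ineq[of "a - b" "b - c"] by simp
  also have "\<dots> \<le> 2 * norm (b - c)"
    using assms by simp
  finally have "(norm (a - c))^2 \<le> (2 * norm (b - c))^2"
    by (intro power_mono) simp_all
  then show ?thesis
    by (simp add: power2_norm_eq_inner power_mult_distrib)
qed

lemma trunc_eig_dist_bound:
  fixes X Y Z :: "real^'n^'n"
  assumes "psd X" "trunc_eig X r Z" "psd Y" "rank Y = r" "1 \<le> r"
    and dist: "(X - Y) \<bullet> (X - Y) \<le> c * (Y \<bullet> Y)" and "0 \<le> c"
  shows "(Z - Y) \<bullet> (Z - Y) \<le> 4 * c * r * (sing_val Y 1)^2"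
proof -
  have "norm (Z - X) \<le> norm (X - Y)"
    using trunc_eig_dist_le[OF assms(1-5)] by (simp add: norm_le norm_minus_commute)
  then have "(Z - Y) \<bullet> (Z - Y) \<le> 4 * ((X - Y) \<bullet> (X - Y))"
    by (rule inner_self_diff_le_four_times)
  also have "\<dots> \<le> 4 * (c * (r * (sing_val Y 1)^2))"
    using dist \<open>0 \<le> c\<close> inner_self_le_rank_sing_val[OF psd_is_svd_sing_val[OF assms(3)] assms(4,5)]
    by (smt (verit) mult_left_mono)
  finally show ?thesis
    by (simp only: mult.assoc)
qed

section \<open>The PSD cone and the projected gradient step\<close>

lemma psd_add: "psd A \<Longrightarrow> psd B \<Longrightarrow> psd (A + B)"
  unfolding psd_def
  by (auto simp: matrix_vector_mult_add_rdistrib inner_add_right transpose_add intro: add_nonneg_nonneg)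

lemma psd_scaleR: "psd A \<Longrightarrow> 0 \<le> c \<Longrightarrow> psd (c *\<^sub>R A)"
  unfolding psd_def by (auto simp: scaleR_matrix_vector_mult transpose_scalar)

lemma psd_outer_self: "psd (outer e e)"
  unfolding psd_def
  by (simp add: transpose_outer outer_mult_vector inner_commute)

lemma zero_in_psd_cone: "0 \<in> psd_cone"
  unfolding psd_cone_def psd_def by (simp add: transpose_def vec_eq_iff)

lemma scaleR_in_psd_cone: "A \<in> psd_cone \<Longrightarrow> 0 \<le> c \<Longrightarrow> c *\<^sub>R A \<in> psd_cone"
  unfolding psd_cone_def by (simp add: psd_scaleR)

lemma convex_psd_cone: "convex psd_cone"
  unfolding psd_cone_def by (rule convexI) (auto intro!: psd_add psd_scaleR)

lemma closed_psd_cone: "closed (psd_cone :: (real^'n^'n) set)"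
proof -
  have "(psd_cone :: (real^'n^'n) set) = {A. \<forall>i j. A$i$j = A$j$i}
      \<inter> {A. \<forall>x. 0 \<le> (\<Sum>i\<in>UNIV. x$i * (\<Sum>j\<in>UNIV. A$i$j * x$j))}"
    unfolding psd_cone_def psd_def
    by (auto simp: transpose_def vec_eq_iff inner_vec_def matrix_vector_mult_def mult.commute)
  also have "closed \<dots>"
    by (intro closed_Int closed_Collect_all closed_Collect_eq closed_Collect_le continuous_intros)
  finally show ?thesis .
qed

lemma closest_point_cone_scaleR:
  fixes S :: "'a::euclidean_space set"
  assumes S: "closed S" "convex S" "S \<noteq> {}" and cone: "\<And>c x. 0 < c \<Longrightarrow> x \<in> S \<Longrightarrow> c *\<^sub>R x \<in> S"
    and c: "c > 0"
  shows "closest_point S (c *\<^sub>R y) = c *\<^sub>R closest_point S y"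
proof -
  let ?p = "closest_point S y"
  have "c *\<^sub>R ?p \<in> S"
    using closest_point_in_set[OF S(1,3)] c cone by blast
  then show ?thesis
  proof (rule closest_point_unique[OF S(2,1), symmetric], intro ballI)
    fix z assume "z \<in> S"
    then have "dist y ?p \<le> dist y ((1/c) *\<^sub>R z)"
      using c cone by (intro closest_point_le[OF S(1)]) simp
    then have "c * dist y ?p \<le> c * dist y ((1/c) *\<^sub>R z)"
      using c by simp
    also have "c * dist y ((1/c) *\<^sub>R z) = dist (c *\<^sub>R y) z"
    proof -
      have "c *\<^sub>R y - z = c *\<^sub>R (y - (1/c) *\<^sub>R z)"
        using c by (simp add: scaleR_diff_right)
      then show ?thesis
        using c by (simp add: dist_norm)
    qed
    finally show "dist (c *\<^sub>R y) (c *\<^sub>R ?p) \<le> dist (c *\<^sub>R y) z"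
      using c by (simp add: dist_norm scaleR_diff_right[symmetric])
  qed
qed

lemma closest_point_gradient_step_fixpoint:
  fixes X g :: "'a::euclidean_space"
  assumes S: "closed S" "convex S" "X \<in> S"
    and vi: "\<And>Y. Y \<in> S \<Longrightarrow> g \<bullet> (Y - X) \<ge> 0" and L: "L > 0"
  shows "closest_point S (X - (1/L) *\<^sub>R g) = X"
proof (rule closest_point_unique[OF S(2,1,3), symmetric], intro ballI)
  fix Z assume "Z \<in> S"
  let ?a = "X - (1/L) *\<^sub>R g"
  have "(dist ?a X)^2 = (1/L)^2 * (norm g)^2"
    using L by (simp add: dist_norm power_divide)
  also have "\<dots> \<le> (norm (X - Z))^2 + (2/L) * (g \<bullet> (Z - X)) + (1/L)^2 * (norm g)^2"
    using vi[OF \<open>Z \<in> S\<close>] L by simp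
  also have "\<dots> = (dist ?a Z)^2"
    unfolding dist_norm power2_norm_eq_inner
    by (simp add: inner_diff_left inner_diff_right inner_commute power2_eq_square algebra_simps)
  finally show "dist ?a X \<le> dist ?a Z"
    by (simp add: power2_le_iff_abs_le)
qed

section \<open>Initialization by one projected gradient step\<close>

lemma nonneg_if_ge_neg_linear:
  fixes a B :: real
  assumes B: "B \<ge> 0" and h: "\<And>t. 0 < t \<Longrightarrow> t \<le> 1 \<Longrightarrow> a \<ge> - B * t"
  shows "a \<ge> 0"
proof (rule ccontr)
  assume "\<not> a \<ge> 0"
  define t where "t = min 1 (- a / (2 * (B + 1)))"
  have t: "0 < t" "t \<le> 1"
    unfolding t_def using \<open>\<not> a \<ge> 0\<close> B by (simp_all add: field_simps)
  have "B * t \<le> B * (- a / (2 * (B + 1)))"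
    unfolding t_def using B by (intro mult_left_mono) auto
  also have "\<dots> = (- a) * (B / (2 * (B + 1)))"
    by (simp add: field_simps)
  also have "\<dots> < (- a) * 1"
    using B \<open>\<not> a \<ge> 0\<close> by (intro mult_strict_left_mono) (simp_all add: field_simps)
  finally show False
    using h[OF t] by simp
qed

lemma strongly_monotone_gradient:
  assumes strong: "\<And>X Y. X \<in> C \<Longrightarrow> Y \<in> C \<Longrightarrow>
                     f Y \<ge> f X + grad X \<bullet> (Y - X) + m / 2 * (norm (Y - X))\<^sup>2"
    and "X \<in> C" "Y \<in> C"
  shows "(grad Y - grad X) \<bullet> (Y - X) \<ge> m * (norm (Y - X))^2"
  using strong[of X Y] strong[of Y X] assms(2,3)
  by (simp add: inner_diff_left inner_diff_right norm_minus_commute)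

lemma gradient_difference_bounds:
  assumes smooth: "\<And>X Y. X \<in> C \<Longrightarrow> Y \<in> C \<Longrightarrow> norm (grad X - grad Y) \<le> M * norm (X - Y)"
    and strong: "\<And>X Y. X \<in> C \<Longrightarrow> Y \<in> C \<Longrightarrow>
                   f Y \<ge> f X + grad X \<bullet> (Y - X) + m / 2 * (norm (Y - X))\<^sup>2"
    and "X \<in> C" "Y \<in> C"
  shows "m * norm (Y - X) \<le> norm (grad Y - grad X)" "norm (grad Y - grad X) \<le> M * norm (Y - X)"
proof -
  have "m * (norm (Y - X))^2 \<le> (grad Y - grad X) \<bullet> (Y - X)"
    by (rule strongly_monotone_gradient[OF strong assms(3,4)])
  also have "\<dots> \<le> norm (grad Y - grad X) * norm (Y - X)"
    by (rule norm_cauchy_schwarz)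
  finally show "m * norm (Y - X) \<le> norm (grad Y - grad X)"
    by (cases "Y = X") (simp_all add: power2_eq_square)
  show "norm (grad Y - grad X) \<le> M * norm (Y - X)"
    by (rule smooth[OF assms(4,3)])
qed

text \<open>First-order optimality of a constrained minimiser, obtained from strong convexity along the
  segment towards \<open>Y\<close> and the Lipschitz gradient instead of differentiability.\<close>

lemma minimizer_variational_inequality:
  assumes C: "convex C" "Xs \<in> C" "Y \<in> C"
    and smooth: "\<And>X Y. X \<in> C \<Longrightarrow> Y \<in> C \<Longrightarrow> norm (grad X - grad Y) \<le> M * norm (X - Y)"
    and strong: "\<And>X Y. X \<in> C \<Longrightarrow> Y \<in> C \<Longrightarrow>
                   f Y \<ge> f X + grad X \<bullet> (Y - X) + m / 2 * (norm (Y - X))\<^sup>2"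
    and "m \<ge> 0" "M \<ge> 0"
    and min: "\<And>Y. Y \<in> C \<Longrightarrow> f Xs \<le> f Y"
  shows "grad Xs \<bullet> (Y - Xs) \<ge> 0"
proof (rule nonneg_if_ge_neg_linear)
  show "M * (norm (Y - Xs))^2 \<ge> 0"
    using \<open>M \<ge> 0\<close> by simp
  fix t :: real assume t: "0 < t" "t \<le> 1"
  define d where "d = Y - Xs"
  define Z where "Z = Xs + t *\<^sub>R d"
  have "Z = (1 - t) *\<^sub>R Xs + t *\<^sub>R Y"
    unfolding Z_def d_def by (simp add: algebra_simps)
  then have Z: "Z \<in> C"
    using convexD[OF C(1,2,3), of "1 - t" t] t by simp
  have "f Xs \<ge> f Z + grad Z \<bullet> (Xs - Z) + m / 2 * (norm (Xs - Z))\<^sup>2"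
    by (rule strong[OF Z C(2)])
  with min[OF Z] \<open>m \<ge> 0\<close> have "grad Z \<bullet> (Xs - Z) \<le> 0"
    by (smt (verit) zero_le_divide_iff zero_le_mult_iff zero_le_power2)
  moreover have "Xs - Z = - t *\<^sub>R d"
    unfolding Z_def by simp
  ultimately have "grad Z \<bullet> d \<ge> 0"
    using t by (simp add: zero_le_mult_iff)
  have "(grad Z - grad Xs) \<bullet> d \<le> norm (grad Z - grad Xs) * norm d"
    by (rule norm_cauchy_schwarz)
  also have "\<dots> \<le> M * (t * norm d) * norm d"
    using smooth[OF Z C(2)] t by (intro mult_right_mono) (simp_all add: Z_def)
  finally have "(grad Z - grad Xs) \<bullet> d \<le> M * (norm d)^2 * t"
    by (simp add: power2_eq_square mult_ac)
  with \<open>grad Z \<bullet> d \<ge> 0\<close> show "grad Xs \<bullet> (Y - Xs) \<ge> - (M * (norm (Y - Xs))^2) * t"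
    unfolding d_def[symmetric] by (simp add: inner_diff_left)
qed

lemma inner_self_step_le:
  fixes X G :: "'a::real_inner"
  assumes "m * (X \<bullet> X) \<le> G \<bullet> X" "norm G \<le> M * norm X" "L > 0"
  shows "(X - (1/L) *\<^sub>R G) \<bullet> (X - (1/L) *\<^sub>R G) \<le> (1 - 2 * m / L + (M / L)^2) * (X \<bullet> X)"
proof -
  have "G \<bullet> G \<le> (M * norm X)^2"
    using assms(2) by (metis norm_ge_zero power2_norm_eq_inner power_mono)
  then have GG: "G \<bullet> G \<le> M^2 * (X \<bullet> X)"
    by (simp add: power_mult_distrib power2_norm_eq_inner)
  have "(X - (1/L) *\<^sub>R G) \<bullet> (X - (1/L) *\<^sub>R G) = X \<bullet> X - 2 / L * (G \<bullet> X) + (G \<bullet> G) / L^2"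
    by (simp add: inner_diff_left inner_diff_right inner_commute power2_eq_square algebra_simps)
  also have "\<dots> \<le> X \<bullet> X - 2 / L * (m * (X \<bullet> X)) + M^2 * (X \<bullet> X) / L^2"
    using assms(1,3) GG by (intro add_mono diff_mono divide_right_mono mult_left_mono) simp_all
  also have "\<dots> = (1 - 2 * m / L + (M / L)^2) * (X \<bullet> X)"
    by (simp add: algebra_simps power_divide)
  finally show ?thesis .
qed

lemma step_factor_le:
  fixes m L M :: real
  assumes "0 < m" "m \<le> L" "L \<le> M"
  shows "1 - 2 * m / L + (M / L)^2 \<le> (M / m)^2 - 2 / (M / m) + 1"
proof -
  have "(M / L)^2 \<le> (M / m)^2"
    using assms by (intro power_mono divide_left_mono) auto
  moreover have "2 / (M / m) \<le> 2 * m / L"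
    using assms by (simp add: divide_left_mono)
  ultimately show ?thesis
    by linarith
qed

lemma condition_factor_nonneg:
  fixes m M :: real
  assumes "0 < m" "m \<le> M"
  shows "0 \<le> (M / m)\<^sup>2 - 2 / (M / m) + 1"
proof -
  have "1 \<le> M / m"
    using assms by simp
  then have "1 \<le> (M / m)\<^sup>2" "2 / (M / m) \<le> 2 / 1"
    by (simp add: one_le_power, intro divide_left_mono) auto
  then show ?thesis
    by linarith
qed

text \<open>\<open>X\<^sup>\<star>\<close> is a fixed point of the projected gradient step, and the projection is nonexpansive, so
  the step from \<open>0\<close> lands within \<open>\<parallel>X\<^sup>\<star> - (\<nabla>f(X\<^sup>\<star>) - \<nabla>f(0))/L\<parallel>\<close> of \<open>X\<^sup>\<star>\<close>.\<close>

lemma projected_gradient_step_from_zero: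
  fixes grad :: "'a::euclidean_space \<Rightarrow> 'a" and C :: "'a set" and L :: real
  assumes C: "closed C" "convex C" "0 \<in> C"
    and smooth: "\<And>X Y. X \<in> C \<Longrightarrow> Y \<in> C \<Longrightarrow> norm (grad X - grad Y) \<le> M * norm (X - Y)"
    and strong: "\<And>X Y. X \<in> C \<Longrightarrow> Y \<in> C \<Longrightarrow>
                   f Y \<ge> f X + grad X \<bullet> (Y - X) + m / 2 * (norm (Y - X))\<^sup>2"
    and mL: "0 < m" "m \<le> L" "L \<le> M"
    and Xs: "Xs \<in> C" and Xs_min: "\<And>Y. Y \<in> C \<Longrightarrow> f Xs \<le> f Y"
  shows "(closest_point C (0 - (1/L) *\<^sub>R grad 0) - Xs) \<bullet> (closest_point C (0 - (1/L) *\<^sub>R grad 0) - Xs)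
    \<le> (1 - 2 * m / L + (M / L)^2) * (Xs \<bullet> Xs)"
proof -
  define P where "P = closest_point C (0 - (1/L) *\<^sub>R grad 0)"
  have "closest_point C (Xs - (1/L) *\<^sub>R grad Xs) = Xs"
  proof (rule closest_point_gradient_step_fixpoint[OF C(1,2) Xs])
    fix Y assume "Y \<in> C"
    then show "grad Xs \<bullet> (Y - Xs) \<ge> 0"
      using mL by (intro minimizer_variational_inequality[OF C(2) Xs _ smooth strong _ _ Xs_min]) auto
  qed (use mL in simp)
  then have "dist P Xs \<le> dist (0 - (1/L) *\<^sub>R grad 0) (Xs - (1/L) *\<^sub>R grad Xs)"
    unfolding P_def using closest_point_lipschitz[OF C(2,1)] C(3) by (metis empty_iff)
  also have "\<dots> = norm (Xs - (1/L) *\<^sub>R (grad Xs - grad 0))"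
    by (simp add: dist_norm norm_minus_commute algebra_simps)
  finally have "(P - Xs) \<bullet> (P - Xs)
      \<le> (Xs - (1/L) *\<^sub>R (grad Xs - grad 0)) \<bullet> (Xs - (1/L) *\<^sub>R (grad Xs - grad 0))"
    by (simp add: dist_norm norm_le)
  also have "\<dots> \<le> (1 - 2 * m / L + (M / L)^2) * (Xs \<bullet> Xs)"
    using strongly_monotone_gradient[OF strong C(3) Xs] smooth[OF Xs C(3)] mL
    by (intro inner_self_step_le) (simp_all add: power2_norm_eq_inner)
  finally show ?thesis
    unfolding P_def .
qed

text \<open>The normalisation \<open>1 / \<parallel>\<nabla>f(0) - \<nabla>f(e\<^sub>1e\<^sub>1\<^sup>T)\<parallel>\<close> in \<open>X\<^sup>0\<close> is a step size \<open>1/L\<close> with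
  \<open>m \<le> L \<le> M\<close>, and by positive homogeneity of the projection \<open>X\<^sup>0\<close> is the projected gradient step
  from \<open>0\<close>.\<close>

lemma projected_gradient_init_dist:
  fixes f :: "real^'n^'n \<Rightarrow> real" and grad :: "real^'n^'n \<Rightarrow> real^'n^'n"
  assumes smooth: "\<And>X Y. X \<in> psd_cone \<Longrightarrow> Y \<in> psd_cone \<Longrightarrow> norm (grad X - grad Y) \<le> M * norm (X - Y)"
    and strong: "\<And>X Y. X \<in> psd_cone \<Longrightarrow> Y \<in> psd_cone \<Longrightarrow>
                   f Y \<ge> f X + grad X \<bullet> (Y - X) + m / 2 * (norm (Y - X))\<^sup>2"
    and mpos: "m > 0"
    and Xs: "Xs \<in> psd_cone" and Xs_min: "\<And>Y. Y \<in> psd_cone \<Longrightarrow> f Xs \<le> f Y"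
    and E: "E \<in> psd_cone" "norm E = 1"
    and X0: "X0 = (1 / norm (grad 0 - grad E)) *\<^sub>R proj_psd (- grad 0)"
  shows "(X0 - Xs) \<bullet> (X0 - Xs) \<le> ((M / m)\<^sup>2 - 2 / (M / m) + 1) * (Xs \<bullet> Xs)" "psd X0" "m \<le> M"
proof -
  define L where "L = norm (grad 0 - grad E)"
  note bounds = gradient_difference_bounds[OF smooth strong zero_in_psd_cone E(1)]
  have mL: "m \<le> L" and LM: "L \<le> M"
    using bounds E(2) unfolding L_def by (simp_all add: norm_minus_commute)
  have X0_step: "X0 = closest_point psd_cone (0 - (1/L) *\<^sub>R grad 0)"
    unfolding X0 proj_psd_def L_def[symmetric] using mL mpos
    by (subst closest_point_cone_scaleR[symmetric])
       (auto intro: closed_psd_cone convex_psd_cone zero_in_psd_cone scaleR_in_psd_cone)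
  have "(X0 - Xs) \<bullet> (X0 - Xs) \<le> (1 - 2 * m / L + (M / L)^2) * (Xs \<bullet> Xs)"
    unfolding X0_step using mpos mL LM
    by (intro projected_gradient_step_from_zero[OF closed_psd_cone convex_psd_cone zero_in_psd_cone
          smooth strong _ _ _ Xs Xs_min])
  also have "\<dots> \<le> ((M / m)\<^sup>2 - 2 / (M / m) + 1) * (Xs \<bullet> Xs)"
    using mpos mL LM by (intro mult_right_mono step_factor_le) simp_all
  finally show "(X0 - Xs) \<bullet> (X0 - Xs) \<le> ((M / m)\<^sup>2 - 2 / (M / m) + 1) * (Xs \<bullet> Xs)" .
  show "psd X0"
    using closest_point_in_set[OF closed_psd_cone] zero_in_psd_cone
    unfolding X0_step psd_cone_def by blast
  show "m \<le> M"
    using mL LM by simp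
qed

section \<open>Orthogonal Procrustes alignment\<close>

definition householder :: "real^'r \<Rightarrow> real^'r^'r" where
  "householder z = mat 1 - (2 / (z \<bullet> z)) *\<^sub>R outer z z"

lemma householder_mult_vector: "householder z *v x = x - ((2 / (z \<bullet> z)) * (z \<bullet> x)) *\<^sub>R z"
  unfolding householder_def
  by (simp add: matrix_vector_mult_diff_rdistrib scaleR_matrix_vector_mult outer_mult_vector)

lemma orthogonal_matrix_householder:
  assumes "z \<noteq> 0"
  shows "orthogonal_matrix (householder z)"
proof -
  have "transpose (householder z) = householder z"
    unfolding householder_def by (simp add: transpose_def vec_eq_iff outer_def mat_def mult.commute)
  moreover have "householder z ** householder z = mat 1"
    using assms
    by (intro matrix_eq[THEN iffD2] allI)
       (simp add: matrix_vector_mul_assoc[symmetric] householder_mult_vector inner_diff_right field_simps)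
  ultimately show ?thesis
    unfolding orthogonal_matrix by simp
qed

lemma trace_mult_scaleR: "trace ((T::real^'r^'r) ** (c *\<^sub>R A)) = c * trace (T ** A)"
  by (simp add: trace_def matrix_matrix_mult_def sum_distrib_left mult_ac)

lemma trace_mult_householder:
  "trace (T ** householder z) = trace T - (2 / (z \<bullet> z)) * (z \<bullet> (T *v z))"
  unfolding householder_def matrix_diff_ldistrib trace_sub trace_mult_scaleR trace_mult_outer by simp

lemma householder_mult_householder:
  assumes "w \<bullet> w = 1"
  shows "householder z ** householder w = mat 1 - (2 / (z \<bullet> z)) *\<^sub>R outer z z - 2 *\<^sub>R outer w w
            + (4 / (z \<bullet> z) * (z \<bullet> w)) *\<^sub>R outer z w"
  using assms
  by (intro matrix_eq[THEN iffD2] allI)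
     (simp add: matrix_vector_mul_assoc[symmetric] householder_mult_vector matrix_vector_mult_diff_rdistrib
       matrix_vector_mult_add_rdistrib scaleR_matrix_vector_mult outer_mult_vector inner_diff_right
       algebra_simps)

text \<open>If \<open>Q = I\<close> maximises \<open>trace (T Q)\<close> over orthogonal \<open>Q\<close>, then comparing with a single
  reflection shows that \<open>T\<close> is positive semidefinite, and comparing with the rotation \<open>H\<^sub>z H\<^sub>w\<close>
  (\<open>z = w + t y\<close>) for small \<open>t\<close> shows that \<open>T\<close> is symmetric.\<close>

lemma trace_max_orthogonal_quad_nonneg:
  fixes T :: "real^'r^'r"
  assumes max: "\<And>Q. orthogonal_matrix Q \<Longrightarrow> trace (T ** Q) \<le> trace T"
  shows "0 \<le> x \<bullet> (T *v x)"
proof (cases "x = 0")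
  case False
  then have "0 \<le> (2 / (x \<bullet> x)) * (x \<bullet> (T *v x))"
    using max[OF orthogonal_matrix_householder[OF False]] unfolding trace_mult_householder by simp
  moreover have "x \<bullet> x > 0"
    using False by simp
  ultimately show ?thesis
    by (simp add: zero_le_divide_iff)
qed simp

lemma trace_max_orthogonal_symmetric_pair:
  fixes T :: "real^'r^'r"
  assumes max: "\<And>Q. orthogonal_matrix Q \<Longrightarrow> trace (T ** Q) \<le> trace T"
    and w: "w \<bullet> w = 1" and y: "y \<bullet> y = 1" and wy: "w \<bullet> y = 0"
  shows "w \<bullet> (T *v y) = y \<bullet> (T *v w)"
proof -
  let ?a = "w \<bullet> (T *v w)" and ?b = "w \<bullet> (T *v y)" and ?c = "y \<bullet> (T *v w)" and ?d = "y \<bullet> (T *v y)"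
  have "2 * (?b - ?c) = 0"
  proof (rule linear_coeff_eq_0_if_quadratic_nonpos)
    fix t :: real
    define z where "z = w + t *\<^sub>R y"
    have zz: "z \<bullet> z = 1 + t^2"
      unfolding z_def using w y wy by (simp add: inner_add_left inner_add_right inner_commute power2_eq_square)
    have zw: "z \<bullet> w = 1"
      unfolding z_def using w wy inner_commute[of y w] by (simp add: inner_add_left)
    have nu: "1 + t^2 > 0"
      by (simp add: add_pos_nonneg)
    have "orthogonal_matrix (householder z ** householder w)"
      using zz w nu by (intro orthogonal_matrix_mul orthogonal_matrix_householder) auto
    then have "trace (T ** (householder z ** householder w)) \<le> trace T"
      by (rule max)
    then have "- 2 / (z \<bullet> z) * (z \<bullet> (T *v z)) - 2 * ?a + 4 / (z \<bullet> z) * (z \<bullet> w) * (w \<bullet> (T *v z)) \<le> 0"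
      unfolding householder_mult_householder[OF w] matrix_add_ldistrib matrix_diff_ldistrib trace_add
        trace_sub trace_mult_scaleR trace_mult_outer
      by simp
    moreover have "z \<bullet> (T *v z) = ?a + t * (?b + ?c) + t^2 * ?d"
      unfolding z_def
      by (simp add: matrix_vector_right_distrib matrix_vector_mult_scaleR inner_add_left inner_add_right
          algebra_simps power2_eq_square)
    moreover have "w \<bullet> (T *v z) = ?a + t * ?b"
      unfolding z_def by (simp add: matrix_vector_right_distrib matrix_vector_mult_scaleR inner_add_right)
    ultimately have "- 2 / (1 + t^2) * (?a + t * (?b + ?c) + t^2 * ?d) - 2 * ?a
        + 4 / (1 + t^2) * (?a + t * ?b) \<le> 0"
      using zz zw by simp
    then have "(1 + t^2) * (- 2 / (1 + t^2) * (?a + t * (?b + ?c) + t^2 * ?d) - 2 * ?a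
        + 4 / (1 + t^2) * (?a + t * ?b)) \<le> 0"
      using nu by (simp add: mult_nonneg_nonpos)
    moreover have "\<nu> * (- 2 / \<nu> * P - 2 * a + 4 / \<nu> * Q) = - 2 * P - 2 * a * \<nu> + 4 * Q"
      if "\<nu> \<noteq> 0" for \<nu> P Q a :: real
      using that by (simp add: field_simps)
    ultimately have "- 2 * (?a + t * (?b + ?c) + t^2 * ?d) - 2 * ?a * (1 + t^2) + 4 * (?a + t * ?b) \<le> 0"
      using nu by (metis less_irrefl)
    then show "t * (2 * (?b - ?c)) + t^2 * (- 2 * (?a + ?d)) \<le> 0"
      by (simp add: algebra_simps)
  qed
  then show ?thesis
    by simp
qed

lemma trace_max_orthogonal_symmetric:
  fixes T :: "real^'r^'r"
  assumes max: "\<And>Q. orthogonal_matrix Q \<Longrightarrow> trace (T ** Q) \<le> trace T"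
  shows "transpose T = T"
proof -
  have entry: "axis i 1 \<bullet> (T *v axis j 1) = T $ i $ j" for i j
    by (simp add: inner_axis' matrix_vector_mult_basis column_def)
  have "T $ i $ j = T $ j $ i" for i j
    using trace_max_orthogonal_symmetric_pair[OF max, of "axis i 1" "axis j 1"]
    by (cases "i = j") (simp_all add: inner_axis_axis entry)
  then show ?thesis
    by (simp add: transpose_def vec_eq_iff)
qed

lemma compact_orthogonal_matrices: "compact {R::real^'r^'r. orthogonal_matrix R}"
proof -
  have "{R::real^'r^'r. orthogonal_matrix R} = {R. \<forall>i j. (\<Sum>k\<in>UNIV. R$k$i * R$k$j) = mat 1 $ i $ j}"
    unfolding orthogonal_matrix by (auto simp: vec_eq_iff matrix_matrix_mult_def transpose_def)
  then have "closed {R::real^'r^'r. orthogonal_matrix R}"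
    by (simp only:) (intro closed_Collect_all closed_Collect_eq continuous_intros)
  moreover have "norm R \<le> sqrt (real CARD('r))" if "orthogonal_matrix R" for R :: "real^'r^'r"
    using that unfolding norm_eq_sqrt_inner inner_matrix_eq_trace orthogonal_matrix by (simp add: trace_I)
  then have "bounded {R::real^'r^'r. orthogonal_matrix R}"
    unfolding bounded_iff by blast
  ultimately show ?thesis
    by (simp add: compact_eq_bounded_closed)
qed

text \<open>The minimiser \<open>R\<close> of \<open>\<parallel>U - V R\<parallel>\<close> over orthogonal matrices maximises
  \<open>trace ((U\<^sup>T V R) Q)\<close> at \<open>Q = I\<close>, so \<open>(V R)\<^sup>T U\<close> is symmetric positive semidefinite.\<close>

lemma procrustes_alignment:
  fixes U V :: "real^'r^'n"
  obtains R where "orthogonal_matrix R"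
    "transpose (transpose (V ** R) ** U) = transpose (V ** R) ** U"
    "\<And>x. 0 \<le> x \<bullet> ((transpose (V ** R) ** U) *v x)"
proof -
  let ?O = "{R::real^'r^'r. orthogonal_matrix R}"
  have "continuous_on ?O (\<lambda>R. norm (U - V ** R))"
    unfolding matrix_matrix_mult_def by (intro continuous_intros)
  then obtain R where R: "orthogonal_matrix R"
    and R_min: "\<And>Q. orthogonal_matrix Q \<Longrightarrow> norm (U - V ** R) \<le> norm (U - V ** Q)"
    using continuous_attains_inf[OF compact_orthogonal_matrices] orthogonal_matrix_id by blast
  define H where "H = V ** R"
  define T where "T = transpose U ** H"
  have max: "trace (T ** Q) \<le> trace T" if Q: "orthogonal_matrix Q" for Q
  proof -
    have "norm (U - H) \<le> norm (U - H ** Q)"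
      using R_min[OF orthogonal_matrix_mul[OF R Q]] unfolding H_def by (simp add: matrix_mul_assoc)
    then have "(U - H) \<bullet> (U - H) \<le> (U - H ** Q) \<bullet> (U - H ** Q)"
      by (simp add: norm_le)
    moreover have "(H ** Q) \<bullet> (H ** Q) = H \<bullet> H"
    proof -
      have "(H ** Q) \<bullet> (H ** Q) = trace (transpose Q ** transpose H ** H ** Q)"
        unfolding inner_matrix_eq_trace by (simp only: matrix_transpose_mul matrix_mul_assoc)
      also have "\<dots> = trace (Q ** transpose Q ** transpose H ** H)"
        by (rule trace_rotate4)
      also have "\<dots> = H \<bullet> H"
        using Q unfolding orthogonal_matrix_def inner_matrix_eq_trace by simp
      finally show ?thesis .
    qed
    moreover have "U \<bullet> (H ** Q) = trace (T ** Q)" "U \<bullet> H = trace T"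
      unfolding inner_matrix_eq_trace T_def by (simp_all only: matrix_mul_assoc)
    ultimately show ?thesis
      by (simp add: inner_diff_left inner_diff_right inner_commute)
  qed
  have T: "transpose T = T"
    by (rule trace_max_orthogonal_symmetric[OF max])
  then have "transpose H ** U = T"
    unfolding T_def by (metis matrix_transpose_mul transpose_transpose)
  then show ?thesis
    using that[OF R] T trace_max_orthogonal_quad_nonneg[OF max] unfolding H_def by simp
qed

lemma Dist_le_orthogonal:
  assumes "orthogonal_matrix R"
  shows "Dist U V \<le> norm (U - V ** R)"
  unfolding Dist_def using assms by (intro cInf_lower bdd_belowI[of _ 0]) auto

lemma Dist_nonneg: "0 \<le> Dist U V"
  unfolding Dist_def using orthogonal_matrix_id by (intro cInf_greatest) auto

section \<open>Factor distance versus Gram distance\<close>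

lemma inner_mult_transpose_swap:
  fixes A C :: "real^'r^'n" and B E :: "real^'r^'m"
  shows "(A ** transpose B) \<bullet> (C ** transpose E) = (transpose C ** A) \<bullet> (transpose E ** B)"
proof -
  have "(A ** transpose B) \<bullet> (C ** transpose E) = trace (B ** (transpose A ** C ** transpose E))"
    unfolding inner_matrix_eq_trace by (simp only: matrix_transpose_mul transpose_transpose matrix_mul_assoc)
  also have "\<dots> = trace (transpose A ** C ** transpose E ** B)"
    using trace_mul_sym[of B "transpose A ** C ** transpose E"] by (simp only: matrix_mul_assoc)
  also have "\<dots> = (transpose C ** A) \<bullet> (transpose E ** B)"
    unfolding inner_matrix_eq_trace by (simp only: matrix_transpose_mul transpose_transpose matrix_mul_assoc)
  finally show ?thesis .
qed

text \<open>Write \<open>U U\<^sup>T - H H\<^sup>T = H D\<^sup>T + D H\<^sup>T + D D\<^sup>T\<close> with \<open>D = U - H\<close> and expand, using the symmetry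
  of \<open>K = H\<^sup>T D\<close>.\<close>

lemma gram_diff_inner_self:
  fixes U H :: "real^'r^'n"
  defines "D \<equiv> U - H"
  assumes K: "transpose (transpose H ** D) = transpose H ** D"
  shows "(U ** transpose U - H ** transpose H) \<bullet> (U ** transpose U - H ** transpose H)
       = 2 * ((D ** transpose H) \<bullet> (D ** transpose H)) + 2 * ((transpose H ** D) \<bullet> (transpose H ** D))
         + 4 * ((transpose H ** D) \<bullet> (transpose D ** D)) + (transpose D ** D) \<bullet> (transpose D ** D)"
proof -
  define K where "K = transpose H ** D"
  define G where "G = transpose D ** D"
  have DH: "transpose D ** H = K"
    using K unfolding K_def by (simp add: matrix_transpose_mul)
  have "U ** transpose U - H ** transpose H = H ** transpose D + D ** transpose H + D ** transpose D"
    unfolding D_def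
    by (simp add: transpose_add transpose_diff matrix_add_ldistrib matrix_add_rdistrib
        matrix_diff_ldistrib matrix_diff_rdistrib algebra_simps)
  moreover have "(H ** transpose D) \<bullet> (H ** transpose D) = (D ** transpose H) \<bullet> (D ** transpose H)"
    using inner_mult_transpose_swap[of H D H D] inner_mult_transpose_swap[of D H D H]
    by (simp add: inner_commute)
  moreover have "(H ** transpose D) \<bullet> (D ** transpose H) = K \<bullet> K"
    using inner_mult_transpose_swap[of H D D H] unfolding DH K_def .
  moreover have "(H ** transpose D) \<bullet> (D ** transpose D) = K \<bullet> G"
    using inner_mult_transpose_swap[of H D D D] unfolding DH G_def .
  moreover have "(D ** transpose H) \<bullet> (D ** transpose D) = K \<bullet> G"
    using inner_mult_transpose_swap[of D H D D] unfolding DH G_def by (simp add: inner_commute)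
  moreover have "(D ** transpose D) \<bullet> (D ** transpose D) = G \<bullet> G"
    using inner_mult_transpose_swap[of D D D D] unfolding G_def .
  ultimately show ?thesis
    unfolding K_def[symmetric] G_def[symmetric]
    by (simp add: inner_add_left inner_add_right inner_commute)
qed

lemma trace_mult_gram_nonneg:
  fixes S :: "real^'r^'r" and D :: "real^'r^'n"
  assumes "\<And>x. 0 \<le> x \<bullet> (S *v x)"
  shows "0 \<le> trace (S ** (transpose D ** D))"
proof -
  have "trace (S ** (transpose D ** D)) = trace (S ** transpose D ** D)"
    by (simp only: matrix_mul_assoc)
  also have "\<dots> = trace (D ** S ** transpose D)"
    by (rule trace_rotate3)
  also have "\<dots> = (\<Sum>i\<in>UNIV. D$i \<bullet> (S *v D$i))"
    by (rule trace_congruence)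
  finally show ?thesis
    using assms by (simp add: sum_nonneg)
qed

lemma trace_gram_mult_gram:
  fixes H D :: "real^'r^'n"
  shows "trace (transpose H ** H ** (transpose D ** D)) = (D ** transpose H) \<bullet> (D ** transpose H)"
  using inner_mult_transpose_swap[of D H D H] trace_mul_sym[of "transpose H ** H" "transpose D ** D"]
  by (simp add: inner_matrix_eq_trace matrix_transpose_mul)

lemma quadratic_lower_bound_arith:
  fixes b k g x :: real
  assumes "- b \<le> x" "- (k * g) \<le> x"
  shows "(4/5) * b \<le> 2 * b + 2 * k^2 + 4 * x + g^2"
proof -
  have "0 \<le> 2 * (k - 0.7 * g)^2 + 0.02 * g^2"
    by simp
  also have "\<dots> = 2 * k^2 - 2.8 * (k * g) + g^2"
    by (simp add: power2_eq_square algebra_simps)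
  finally show ?thesis
    \<comment> \<open>split \<open>4 x = 1.2 x + 2.8 x\<close> and bound the parts by the two hypotheses\<close>
    using assms by linarith
qed

text \<open>In the expansion of \<open>\<parallel>U U\<^sup>T - H H\<^sup>T\<parallel>\<^sup>2\<close> the cross term \<open>\<langle>K, D\<^sup>T D\<rangle>\<close> is bounded below both by
  \<open>-\<parallel>D H\<^sup>T\<parallel>\<^sup>2\<close>, because \<open>\<langle>H\<^sup>T U, D\<^sup>T D\<rangle> \<ge> 0\<close>, and by \<open>-\<parallel>K\<parallel> \<parallel>D\<^sup>T D\<parallel>\<close>.\<close>

lemma factor_dist_le_gram_dist:
  fixes U H :: "real^'r^'n"
  assumes sym: "transpose (transpose H ** U) = transpose H ** U"
    and psd: "\<And>x. 0 \<le> x \<bullet> ((transpose H ** U) *v x)"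
    and lam: "\<And>x. lam * (x \<bullet> x) \<le> (H *v x) \<bullet> (H *v x)"
  shows "(4/5) * lam * ((U - H) \<bullet> (U - H))
    \<le> (U ** transpose U - H ** transpose H) \<bullet> (U ** transpose U - H ** transpose H)"
proof -
  define D where "D = U - H"
  define S where "S = transpose H ** U"
  define K where "K = transpose H ** D"
  define G where "G = transpose D ** D"
  define b where "b = (D ** transpose H) \<bullet> (D ** transpose H)"
  have K_S: "K = S - transpose H ** H"
    unfolding K_def S_def D_def by (rule matrix_diff_ldistrib)
  have tK: "transpose K = K"
    using sym unfolding K_S transpose_diff S_def by (simp add: matrix_transpose_mul)
  have "lam * (D \<bullet> D) \<le> b"
    using lam unfolding b_def inner_self_rows row_mult_transpose by (simp add: sum_distrib_left sum_mono)
  moreover have "- b \<le> K \<bullet> G"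
  proof -
    have "trace (transpose H ** H ** G) = b"
      unfolding G_def b_def by (rule trace_gram_mult_gram)
    moreover have "0 \<le> trace (S ** G)"
      using psd unfolding G_def S_def by (rule trace_mult_gram_nonneg)
    moreover have "K \<bullet> G = trace (S ** G) - trace (transpose H ** H ** G)"
      unfolding inner_matrix_eq_trace tK unfolding K_S matrix_diff_rdistrib trace_sub ..
    ultimately show ?thesis
      by linarith
  qed
  moreover have "- (norm K * norm G) \<le> K \<bullet> G"
    using Cauchy_Schwarz_ineq2[of K G] by linarith
  ultimately have "(4/5) * lam * (D \<bullet> D) \<le> 2 * b + 2 * (norm K)^2 + 4 * (K \<bullet> G) + (norm G)^2"
    using quadratic_lower_bound_arith[of b "K \<bullet> G" "norm K" "norm G"] by linarith
  also have "\<dots> = (U ** transpose U - H ** transpose H) \<bullet> (U ** transpose U - H ** transpose H)"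
    using gram_diff_inner_self[of H U] tK unfolding b_def K_def G_def D_def
    by (simp add: power2_norm_eq_inner)
  finally show ?thesis
    unfolding D_def .
qed

lemma Dist_le_gram_dist:
  fixes U V :: "real^'r^'n"
  assumes rank: "rank (V ** transpose V) = CARD('r)"
  shows "(4/5) * (sing_val V CARD('r))^2 * (Dist U V)^2
    \<le> (U ** transpose U - V ** transpose V) \<bullet> (U ** transpose U - V ** transpose V)"
proof -
  obtain R where R: "orthogonal_matrix R"
    and sym: "transpose (transpose (V ** R) ** U) = transpose (V ** R) ** U"
    and psd: "\<And>x. 0 \<le> x \<bullet> ((transpose (V ** R) ** U) *v x)"
    using procrustes_alignment[where U = U and V = V] by blast
  define H where "H = V ** R"
  have "H ** transpose H = V ** (R ** transpose R) ** transpose V"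
    unfolding H_def by (simp only: matrix_transpose_mul matrix_mul_assoc)
  then have gram: "H ** transpose H = V ** transpose V"
    using R by (simp add: orthogonal_matrix_def)
  note V = gram_factor_full_rank[OF rank]
  have "(sing_val V CARD('r))^2 * (x \<bullet> x) \<le> (H *v x) \<bullet> (H *v x)" for x
  proof -
    have "(sing_val V CARD('r))^2 * ((R *v x) \<bullet> (R *v x)) \<le> (V *v (R *v x)) \<bullet> (V *v (R *v x))"
      by (rule inner_self_mult_vector_ge_sing_val[OF V(1,3)])
    then show ?thesis
      unfolding H_def inner_orthogonal_matrix_mult[OF R] matrix_vector_mul_assoc .
  qed
  with sym psd have "(4/5) * (sing_val V CARD('r))^2 * ((U - H) \<bullet> (U - H))
      \<le> (U ** transpose U - H ** transpose H) \<bullet> (U ** transpose U - H ** transpose H)"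
    unfolding H_def[symmetric] by (rule factor_dist_le_gram_dist)
  then have "(4/5) * (sing_val V CARD('r))^2 * ((U - H) \<bullet> (U - H))
      \<le> (U ** transpose U - V ** transpose V) \<bullet> (U ** transpose U - V ** transpose V)"
    unfolding gram .
  moreover have "(Dist U V)^2 \<le> (norm (U - H))^2"
    using Dist_le_orthogonal[OF R, of U V] Dist_nonneg[of U V] unfolding H_def by (rule power_mono)
  then have "(4/5) * (sing_val V CARD('r))^2 * (Dist U V)^2
      \<le> (4/5) * (sing_val V CARD('r))^2 * ((U - H) \<bullet> (U - H))"
    by (intro mult_left_mono) (simp_all add: power2_norm_eq_inner)
  ultimately show ?thesis
    by linarith
qed

lemma dist_bound_from_gram_bound:
  fixes a q sr s1 c r N :: real
  assumes lower: "(4/5) * q^2 * a^2 \<le> N" and upper: "N \<le> 4 * c * r * s1^2" and "sr \<le> q^2"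
    and "q > 0" "sr > 0" "s1 \<ge> 0" "c \<ge> 0" "r \<ge> 1" "a \<ge> 0"
  shows "a \<le> 4 * sqrt 2 * r * (s1 / sr) * sqrt c * q"
proof -
  define T where "T = 4 * sqrt 2 * r * (s1 / sr) * sqrt c * q"
  have "q^2 * a^2 \<le> 5 * c * r * s1^2"
    using lower upper by simp
  then have "a^2 \<le> 5 * c * r * s1^2 / q^2"
    using \<open>q > 0\<close> by (simp add: field_simps)
  also have "\<dots> \<le> 32 * r^2 * s1^2 * c / q^2"
  proof (rule divide_right_mono)
    have "5 * (c * r * s1^2) \<le> 32 * r * (c * r * s1^2)"
      using assms(6-8) by (intro mult_right_mono) simp_all
    then show "5 * c * r * s1^2 \<le> 32 * r^2 * s1^2 * c"
      by (simp add: power2_eq_square mult_ac)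
  qed simp
  also have "\<dots> = 32 * r^2 * s1^2 * c * q^2 / (q^2)^2"
    using \<open>q > 0\<close> by (simp add: power2_eq_square)
  also have "\<dots> \<le> 32 * r^2 * s1^2 * c * q^2 / sr^2"
    using assms(3-8) by (intro divide_left_mono power_mono) simp_all
  also have "\<dots> = T^2"
    unfolding T_def using \<open>c \<ge> 0\<close> by (simp add: power_mult_distrib power_divide)
  finally have "a^2 \<le> T^2" .
  moreover have "T \<ge> 0"
    unfolding T_def using assms(4-8) by simp
  ultimately show ?thesis
    unfolding T_def[symmetric] by (rule power2_le_imp_le)
qed

theorem corollary5p3:
  fixes f :: "real^'n^'n \<Rightarrow> real"
    and grad :: "real^'n^'n \<Rightarrow> real^'n^'n"
    and M m :: real
    and i1 :: 'n
    and Xs X0 X0r :: "real^'n^'n"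
    and U0 Us :: "real^'r^'n"
  assumes grad: "\<And>X. (f has_derivative (\<lambda>H. grad X \<bullet> H)) (at X)"
    and sym: "\<And>X. f (transpose X) = f X"
    and cvx: "convex_on psd_cone f"
    and smooth: "\<And>X Y. X \<in> psd_cone \<Longrightarrow> Y \<in> psd_cone \<Longrightarrow> norm (grad X - grad Y) \<le> M * norm (X - Y)"
    and strong: "\<And>X Y. X \<in> psd_cone \<Longrightarrow> Y \<in> psd_cone \<Longrightarrow>
                   f Y \<ge> f X + grad X \<bullet> (Y - X) + m / 2 * (norm (Y - X))\<^sup>2"
    and mpos: "m > 0"
    and Xs_psd: "Xs \<in> psd_cone"
    and Xs_min: "\<And>Y. Y \<in> psd_cone \<Longrightarrow> f Xs \<le> f Y"
    and X0_def: "X0 = (1 / norm (grad 0 - grad (outer (axis i1 1) (axis i1 1)))) *\<^sub>R proj_psd (- grad 0)"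
    and X0r: "trunc_eig X0 CARD('r) X0r"
    and U0: "U0 ** transpose U0 = X0r"
    and rank_Xs: "rank Xs = CARD('r)"
    and Us: "Us ** transpose Us = Xs"
  shows "Dist U0 Us \<le> 4 * sqrt 2 * real CARD('r) * tau Xs
            * sqrt ((M / m)\<^sup>2 - 2 / (M / m) + 1) * sing_val Us CARD('r)"
proof -
  let ?r = "CARD('r)" and ?c = "(M / m)\<^sup>2 - 2 / (M / m) + 1" and ?E = "outer (axis i1 1) (axis i1 (1::real))"
  have r1: "1 \<le> ?r"
    by (simp add: Suc_leI)
  have "?E \<in> psd_cone" "norm ?E = 1"
    by (simp_all add: psd_cone_def psd_outer_self norm_eq_sqrt_inner inner_outer)
  note init = projected_gradient_init_dist[OF smooth strong mpos Xs_psd Xs_min this X0_def]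
  note c_nonneg = condition_factor_nonneg[OF mpos init(3)]
  have psd_Xs: "psd Xs"
    using Xs_psd by (simp add: psd_cone_def)
  have gram: "(X0r - Xs) \<bullet> (X0r - Xs) \<le> 4 * ?c * ?r * (sing_val Xs 1)^2"
    by (rule trunc_eig_dist_bound[OF init(2) X0r psd_Xs rank_Xs r1 init(1) c_nonneg])
  have rank_gram: "rank (Us ** transpose Us) = ?r"
    using Us rank_Xs by simp
  note factor = Dist_le_gram_dist[OF rank_gram, of U0, unfolded U0 Us]
  note Xs_sv = sing_val_rank_pos[OF psd_is_svd_sing_val[OF psd_Xs] rank_Xs r1]
  note Us_sv = sing_val_rank_pos[OF gram_factor_full_rank(3,2)[OF rank_gram] r1]
  have "Dist U0 Us \<le> 4 * sqrt 2 * ?r * (sing_val Xs 1 / sing_val Xs ?r) * sqrt ?c * sing_val Us ?r"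
    by (rule dist_bound_from_gram_bound[OF factor gram sing_val_gram_le[OF rank_gram, unfolded Us]])
      (use Xs_sv Us_sv Dist_nonneg c_nonneg r1 in simp_all)
  then show ?thesis
    unfolding tau_def rank_Xs .
qed

end
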